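(* Let $\{(\mathbf{x}^k,\mathbf{r}^k,\boldsymbol{\lambda}^k)\}$ be generated by Algorithm 1 with $0<\rho\le\frac{\beta}{m}$ and $\mathbf{P}_i\succeq L_i\mathbf{I}+\beta\mathbf{A}_i^\top\mathbf{A}_i$ for all $i$. For $K\ge1$ let $\bar{\mathbf{x}}^{K+1}=\frac{\mathbf{x}^{K+1}+\frac1m\sum_{k=1}^K\mathbf{x}^{k}}{1+K/m}$. Then for every $\mathbf{x}$ with $\mathbf{A}\mathbf{x}=\mathbf{b}$ and every (possibly random, square-integrable) $\boldsymbol{\lambda}\in\mathbb{R}^q$, $$\mathbb{E}\,\Phi(\bar{\mathbf{x}}^{K+1},\mathbf{x},\boldsymbol{\lambda})\le\frac{1}{1+K/m}\Big(C_0(\mathbf{x})+\frac{1}{2m\rho}\mathbb{E}\|\boldsymbol{\lambda}\|^2\Big),$$ where $C_0(\mathbf{x})=(1-\frac1m)[F(\mathbf{x}^0)-F(\mathbf{x})]+\frac12\|\mathbf{x}^0-\mathbf{x}\|_{\mathbf{P}}^2+(\frac{\beta}{2}-\frac{\beta}{m})\|\mathbf{r}^0\|^2$ and $\mathbf{P}=\mathrm{blkdiag}(\mathbf{P}_1,\ldots,\mathbf{P}_m)$.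
   Context: Problem: $\min_{\mathbf{x}} F(\mathbf{x}):=f(\mathbf{x})+g(\mathbf{x})$ s.t. $\mathbf{A}\mathbf{x}=\mathbf{b}$, where $\mathbf{x}=(\mathbf{x}_1;\ldots;\mathbf{x}_m)$ with blocks $\mathbf{x}_i\in\mathbb{R}^{n_i}$, $g(\mathbf{x})=\sum_{i=1}^m g_i(\mathbf{x}_i)$, $\mathbf{A}=[\mathbf{A}_1,\ldots,\mathbf{A}_m]$ with $\mathbf{A}_i\in\mathbb{R}^{q\times n_i}$, $\mathbf{b}\in\mathbb{R}^q$; $f$ is convex and continuously differentiable, each $g_i$ is proper, convex, lower semicontinuous. Define $\Phi(\bar{\mathbf{x}},\mathbf{x},\boldsymbol{\lambda})=F(\bar{\mathbf{x}})-F(\mathbf{x})-\langle\boldsymbol{\lambda},\mathbf{A}\bar{\mathbf{x}}-\mathbf{b}\rangle$. $\mathbf{U}_i\mathbf{y}$ denotes the vector whose $i$-th block is $\mathbf{y}_i$ and other blocks zero; $\|\mathbf{z}\|_{\mathbf{M}}^2=\mathbf{z}^\top\mathbf{M}\mathbf{z}$. Assumption (gradient Lipschitz continuity): there are constants $L_i>0$ and $L_r$ with $\|\nabla_i f(\mathbf{x}+\mathbf{U}_i\mathbf{y})-\nabla_i f(\mathbf{x})\|\le L_i\|\mathbf{y}_i\|$ and $\|\nabla f(\mathbf{x}+\mathbf{U}_i\mathbf{y})-\nabla f(\mathbf{x})\|\le L_r\|\mathbf{y}_i\|$ for all $i,\mathbf{x},\mathbf{y}$. Algorithm 1 (randomized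 primal-dual block update): choose $\mathbf{x}^0$, set $\boldsymbol{\lambda}^0=\mathbf{0}$, $\mathbf{r}^0=\mathbf{A}\mathbf{x}^0-\mathbf{b}$, parameters $\beta>0,\rho>0$, symmetric PSD matrices $\mathbf{P}_i$. For $k=0,1,\ldots$: pick $i_k\in\{1,\ldots,m\}$ uniformly at random, independent of $i_0,\ldots,i_{k-1}$; set $\mathbf{x}_i^{k+1}=\mathbf{x}_i^k$ for $i\ne i_k$ and $$\mathbf{x}_{i_k}^{k+1}\in\arg\min_{\mathbf{x}_{i_k}}\big\langle\nabla_{i_k} f(\mathbf{x}^k)-\mathbf{A}_{i_k}^\top(\boldsymbol{\lambda}^k-\beta\mathbf{r}^k),\mathbf{x}_{i_k}\big\rangle+g_{i_k}(\mathbf{x}_{i_k})+\tfrac12\|\mathbf{x}_{i_k}-\mathbf{x}_{i_k}^k\|_{\mathbf{P}_{i_k}}^2;$$ then $\mathbf{r}^{k+1}=\mathbf{r}^k+\mathbf{A}_{i_k}(\mathbf{x}_{i_k}^{k+1}-\mathbf{x}_{i_k}^k)$ and $\boldsymbol{\lambda}^{k+1}=\boldsymbol{\lambda}^k-\rho\mathbf{r}^{k+1}$. $\mathbb{E}$ is total expectation. *)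

theory Defs
  imports "HOL-Analysis.Analysis" "HOL-Probability.Probability"
begin

text \<open>Block structure: the variable x lives in real^'n; the coordinate j belongs
  to block blk j (blocks are numbered 0..m-1).  U_i y keeps the coordinates of
  block i and zeroes the others.\<close>
definition blockU :: "('n \<Rightarrow> nat) \<Rightarrow> nat \<Rightarrow> real^'n \<Rightarrow> real^'n" where
  "blockU blk i y = (\<chi> j. if blk j = i then y $ j else 0)"

text \<open>g depends only on the coordinates of block i (so it is a function of x_i).\<close>
definition block_fun :: "('n \<Rightarrow> nat) \<Rightarrow> nat \<Rightarrow> (real^'n \<Rightarrow> ereal) \<Rightarrow> bool" where
  "block_fun blk i h \<longleftrightarrow> (\<forall>x y. (\<forall>j. blk j = i \<longrightarrow> x $ j = y $ j) \<longrightarrow> h x = h y)"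

definition proper_fun :: "('a \<Rightarrow> ereal) \<Rightarrow> bool" where
  "proper_fun h \<longleftrightarrow> (\<exists>x. h x < \<infinity>) \<and> (\<forall>x. - \<infinity> < h x)"

definition convex_ereal :: "('a::real_vector \<Rightarrow> ereal) \<Rightarrow> bool" where
  "convex_ereal h \<longleftrightarrow> (\<forall>x y u. 0 \<le> u \<and> u \<le> 1 \<longrightarrow>
      h (u *\<^sub>R x + (1 - u) *\<^sub>R y) \<le> ereal u * h x + ereal (1 - u) * h y)"

definition lsc_ereal :: "('a::topological_space \<Rightarrow> ereal) \<Rightarrow> bool" where
  "lsc_ereal h \<longleftrightarrow> (\<forall>x X. X \<longlonglongrightarrow> x \<longrightarrow> h x \<le> liminf (\<lambda>k. h (X k)))"

definition Fobj :: "(real^'n \<Rightarrow> real) \<Rightarrow> (nat \<Rightarrow> real^'n \<Rightarrow> ereal) \<Rightarrow> nat \<Rightarrow> real^'n \<Rightarrow> ereal" where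
  "Fobj f g m x = ereal (f x) + (\<Sum>i<m. g i x)"

definition Phi :: "(real^'n \<Rightarrow> real) \<Rightarrow> (nat \<Rightarrow> real^'n \<Rightarrow> ereal) \<Rightarrow> nat \<Rightarrow> real^'n^'q \<Rightarrow> real^'q
     \<Rightarrow> real^'n \<Rightarrow> real^'n \<Rightarrow> real^'q \<Rightarrow> ereal" where
  "Phi f g m A b xb x lam = Fobj f g m xb - Fobj f g m x - ereal (lam \<bullet> (A *v xb - b))"

definition eexpectation :: "'w measure \<Rightarrow> ('w \<Rightarrow> ereal) \<Rightarrow> ereal" where
  "eexpectation M X = enn2ereal (\<integral>\<^sup>+ w. e2ennreal (X w) \<partial>M) - enn2ereal (\<integral>\<^sup>+ w. e2ennreal (- X w) \<partial>M)"

end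

theory Submission
  imports Defs
begin

text \<open>Each iteration moves one uniformly chosen block by a linearized proximal step. The block
  descent lemma, the three-point property of the proximal step and the block-diagonal form of
  \<open>P\<close> give a pathwise one-step inequality in which \<open>F(x\<^sup>k) - F(x)\<close> contracts by the factor
  \<open>1 - 1/m\<close>, up to a term that depends on the chosen block. Averaged over the blocks this term
  becomes the gradient inequality for \<open>f\<close> plus a pairing with the residual, and its deviation from
  the average has mean zero because \<open>x\<^sup>k\<close> is determined by the indices drawn before step \<open>k\<close>.
  Telescoping, the multipliers \<open>\<lambda>\<^sup>k = -\<rho> \<Sum>\<^sub>j\<^sub>=\<^sub>1\<^sup>k r\<^sup>j\<close> produce a quadratic form in the residuals that
  is nonpositive when \<open>m\<rho> \<le> \<beta>\<close>, the pairing with \<open>\<lambda>\<close> is paid for by Young's inequality, and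
  Jensen's inequality transfers the bound to the ergodic average.\<close>

section \<open>Estimates for the multiplier sequence\<close>

lemma neg_inner_le_young:
  fixes u v :: "'a::real_inner"
  assumes "c > 0"
  shows "- inner u v \<le> inner u u / (2 * c) + c / 2 * inner v v"
proof -
  have "0 \<le> inner (u + c *\<^sub>R v) (u + c *\<^sub>R v)" by simp
  also have "\<dots> = inner u u + 2 * c * inner u v + c\<^sup>2 * inner v v"
    by (simp add: inner_simps inner_commute power2_eq_square algebra_simps)
  finally have "0 \<le> (inner u u + 2 * c * inner u v + c\<^sup>2 * inner v v) / (2 * c)"
    using assms by simp
  also have "\<dots> = inner u u / (2 * c) + inner u v + c / 2 * inner v v"
    using assms by (simp add: field_simps power2_eq_square)
  finally show ?thesis by simp
qed

lemma multiplier_sum_identity: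
  fixes r :: "nat \<Rightarrow> 'a::real_inner" and a \<beta> \<rho> :: real
  defines "S \<equiv> \<lambda>k. \<Sum>j\<in>{1..k}. r j"
  shows "(\<Sum>k\<le>K. inner (-(\<rho> *\<^sub>R S k) - \<beta> *\<^sub>R r k) (r (Suc k) - a *\<^sub>R r k)
             - \<beta>/2 * inner (r (Suc k) - r k) (r (Suc k) - r k))
    = -\<rho>/2 * inner (S (Suc K)) (S (Suc K)) + a*\<rho>/2 * inner (S K) (S K)
      + \<rho>/2 * (\<Sum>k\<in>{1..Suc K}. inner (r k) (r k)) + a*\<rho>/2 * (\<Sum>k\<in>{1..K}. inner (r k) (r k))
      + (a - 1/2) * \<beta> * inner (r 0) (r 0) + (a - 1) * \<beta> * (\<Sum>k\<in>{1..K}. inner (r k) (r k))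
      - \<beta>/2 * inner (r (Suc K)) (r (Suc K))"
proof (induction K)
  case 0
  have "S 1 = r 1" "S 0 = 0" by (simp_all add: S_def)
  then show ?case by (simp add: inner_simps inner_commute algebra_simps)
next
  case (Suc K)
  have "S (Suc (Suc K)) = S (Suc K) + r (Suc (Suc K))" "S (Suc K) = S K + r (Suc K)"
    by (simp_all add: S_def)
  then show ?case
    unfolding sum.atMost_Suc Suc.IH by (simp add: inner_simps inner_commute algebra_simps)
qed

text \<open>The first argument of the inner product is \<open>\<lambda>\<^sup>k - \<beta> r\<^sup>k\<close> with \<open>\<lambda>\<^sup>k = -\<rho> \<Sum>\<^sub>j\<^sub>=\<^sub>1\<^sup>k r\<^sup>j\<close>.\<close>
lemma multiplier_sum_bound:
  fixes r :: "nat \<Rightarrow> 'a::real_inner" and lam :: 'a and \<beta> \<rho> :: real and m :: nat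
  assumes m: "m \<ge> 1" and \<rho>: "\<rho> > 0" "\<rho> \<le> \<beta> / real m"
  shows "(\<Sum>k\<le>K. inner (-(\<rho> *\<^sub>R (\<Sum>j\<in>{1..k}. r j)) - \<beta> *\<^sub>R r k) (r (Suc k) - (1 - 1 / real m) *\<^sub>R r k)
             - \<beta>/2 * inner (r (Suc k) - r k) (r (Suc k) - r k))
         - inner lam (r (Suc K) + (1 / real m) *\<^sub>R (\<Sum>j\<in>{1..K}. r j))
    \<le> (\<beta>/2 - \<beta>/real m) * inner (r 0) (r 0) + inner lam lam / (2 * real m * \<rho>)"
proof -
  define a where "a = 1 - 1 / real m"
  define S where "S = (\<Sum>j\<in>{1..K}. r j)"
  define R where "R = r (Suc K)"
  define Q where "Q = (\<Sum>k\<in>{1..K}. inner (r k) (r k))"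
  define v where "v = R + (1 / real m) *\<^sub>R S"
  have mpos: "real m > 0" using m by simp
  have "(\<Sum>k\<le>K. inner (-(\<rho> *\<^sub>R (\<Sum>j\<in>{1..k}. r j)) - \<beta> *\<^sub>R r k) (r (Suc k) - a *\<^sub>R r k)
             - \<beta>/2 * inner (r (Suc k) - r k) (r (Suc k) - r k))
    = -\<rho>/2 * inner (S + R) (S + R) + a*\<rho>/2 * inner S S + \<rho>/2 * (Q + inner R R) + a*\<rho>/2 * Q
      + (a - 1/2) * \<beta> * inner (r 0) (r 0) + (a - 1) * \<beta> * Q - \<beta>/2 * inner R R"
    using multiplier_sum_identity[of \<rho> r \<beta> a K] by (simp add: S_def R_def Q_def)
  also have "\<dots> = (real m * \<rho> - \<beta>) / 2 * inner R R - real m * \<rho> / 2 * inner v v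
      + (\<rho> / 2 * (1 + a) - \<beta> / real m) * Q + (\<beta>/2 - \<beta>/real m) * inner (r 0) (r 0)"
    using mpos by (simp add: v_def a_def inner_simps inner_commute field_simps power2_eq_square)
  also have "\<dots> \<le> - real m * \<rho> / 2 * inner v v + (\<beta>/2 - \<beta>/real m) * inner (r 0) (r 0)"
proof -
    have "real m * \<rho> \<le> \<beta>" using \<rho> mpos by (simp add: field_simps)
    moreover have "\<rho> / 2 * (1 + a) \<le> \<beta> / real m"
    proof -
      have "\<rho> / 2 * (1 + a) \<le> \<rho>" using \<rho> mpos m by (simp add: a_def field_simps)
      then show ?thesis using \<rho> by linarith
    qed
    moreover have "Q \<ge> 0" by (simp add: Q_def sum_nonneg)
    ultimately have "(real m * \<rho> - \<beta>) / 2 * inner R R \<le> 0"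
      and "(\<rho> / 2 * (1 + a) - \<beta> / real m) * Q \<le> 0"
      by (simp_all add: mult_nonpos_nonneg)
    then show ?thesis by linarith
  qed
  finally have "(\<Sum>k\<le>K. inner (-(\<rho> *\<^sub>R (\<Sum>j\<in>{1..k}. r j)) - \<beta> *\<^sub>R r k) (r (Suc k) - a *\<^sub>R r k)
             - \<beta>/2 * inner (r (Suc k) - r k) (r (Suc k) - r k))
      \<le> - real m * \<rho> / 2 * inner v v + (\<beta>/2 - \<beta>/real m) * inner (r 0) (r 0)" .
  moreover have "- inner lam v \<le> inner lam lam / (2 * (real m * \<rho>)) + real m * \<rho> / 2 * inner v v"
    using neg_inner_le_young[of "real m * \<rho>" lam v] \<rho> mpos by simp
  ultimately show ?thesis by (simp add: a_def v_def S_def R_def mult.assoc)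
qed

section \<open>Convexity and proximal points\<close>

lemma convex_on_gradient_ineq:
  fixes f :: "'a::real_inner \<Rightarrow> real"
  assumes f_convex: "convex_on UNIV f"
    and f_grad: "\<forall>z. (f has_derivative (\<lambda>h. gradf z \<bullet> h)) (at z)"
  shows "f x + gradf x \<bullet> (y - x) \<le> f y"
proof -
  define \<psi> where "\<psi> t = f (x + t *\<^sub>R (y - x))" for t
  have "convex_on UNIV \<psi>"
  proof (rule convex_onI)
    fix s t u :: real assume u: "0 < u" "u < 1"
    have "\<psi> ((1 - u) *\<^sub>R s + u *\<^sub>R t) = f ((1 - u) *\<^sub>R (x + s *\<^sub>R (y - x)) + u *\<^sub>R (x + t *\<^sub>R (y - x)))"
      unfolding \<psi>_def by (simp add: algebra_simps)
    also have "\<dots> \<le> (1 - u) * \<psi> s + u * \<psi> t"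
      unfolding \<psi>_def using f_convex u by (intro convex_onD) auto
    finally show "\<psi> ((1 - u) *\<^sub>R s + u *\<^sub>R t) \<le> (1 - u) * \<psi> s + u * \<psi> t" .
  qed simp
  moreover have "(\<psi> has_real_derivative (gradf x \<bullet> (y - x))) (at 0 within UNIV)"
proof -
    have "((\<lambda>t. x + t *\<^sub>R (y - x)) has_derivative (\<lambda>h. h *\<^sub>R (y - x))) (at 0)"
      by (auto intro!: derivative_eq_intros)
    from has_derivative_compose[OF this f_grad[rule_format]]
    have "(\<psi> has_derivative (\<lambda>h. gradf x \<bullet> (h *\<^sub>R (y - x)))) (at 0)"
      by (simp add: \<psi>_def[abs_def])
    moreover have "(\<lambda>h. gradf x \<bullet> (h *\<^sub>R (y - x))) = (*) (gradf x \<bullet> (y - x))"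
      by (auto simp: mult.commute)
    ultimately show ?thesis by (simp add: has_field_derivative_def)
  qed
  ultimately have "gradf x \<bullet> (y - x) * (1 - 0) \<le> \<psi> 1 - \<psi> 0"
    by (intro convex_on_imp_above_tangent) auto
  then show ?thesis by (simp add: \<psi>_def)
qed

lemma convex_ereal_finite_part:
  fixes h :: "'a::real_vector \<Rightarrow> ereal"
  assumes h_convex: "convex_ereal h" and h_proper: "\<forall>v. -\<infinity> < h v"
  shows "convex {v. h v < \<infinity>}" and "convex_on {v. h v < \<infinity>} (\<lambda>v. real_of_ereal (h v))"
proof -
  have main: "h ((1 - t) *\<^sub>R x + t *\<^sub>R y) \<le> ereal ((1 - t) * real_of_ereal (h x) + t * real_of_ereal (h y))"
    if t: "0 \<le> t" "t \<le> 1" and fin: "h x < \<infinity>" "h y < \<infinity>" for t x y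
proof -
    obtain a b where "h x = ereal a" "h y = ereal b"
      using fin h_proper[rule_format, of x] h_proper[rule_format, of y] by (cases "h x"; cases "h y") auto
    moreover have "h (t *\<^sub>R y + (1 - t) *\<^sub>R x) \<le> ereal t * h y + ereal (1 - t) * h x"
      using h_convex t unfolding convex_ereal_def by blast
    ultimately show ?thesis by (simp add: add.commute)
  qed
  show "convex {v. h v < \<infinity>}"
    unfolding convex_alt using main by (fastforce intro: le_less_trans)
  then show "convex_on {v. h v < \<infinity>} (\<lambda>v. real_of_ereal (h v))"
  proof (intro convex_onI)
    fix x y and t :: real assume "0 < t" "t < 1" "x \<in> {v. h v < \<infinity>}" "y \<in> {v. h v < \<infinity>}"
    with main[of t x y] h_proper show "real_of_ereal (h ((1 - t) *\<^sub>R x + t *\<^sub>R y))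
      \<le> (1 - t) * real_of_ereal (h x) + t * real_of_ereal (h y)"
      by (cases "h ((1 - t) *\<^sub>R x + t *\<^sub>R y)") auto
  qed
qed

lemma convex_ereal_add_linear:
  fixes h :: "'a::real_inner \<Rightarrow> ereal"
  assumes h_convex: "convex_ereal h" and h_proper: "\<forall>v. -\<infinity> < h v"
  shows "convex_ereal (\<lambda>v. ereal (c \<bullet> v) + h v)"
  unfolding convex_ereal_def
proof (intro allI impI)
  fix x y :: 'a and u :: real assume u: "0 \<le> u \<and> u \<le> 1"
  have "h (u *\<^sub>R x + (1 - u) *\<^sub>R y) \<le> ereal u * h x + ereal (1 - u) * h y"
    using h_convex u unfolding convex_ereal_def by blast
  then have "ereal (c \<bullet> (u *\<^sub>R x + (1 - u) *\<^sub>R y)) + h (u *\<^sub>R x + (1 - u) *\<^sub>R y)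
      \<le> ereal (u * (c \<bullet> x) + (1 - u) * (c \<bullet> y)) + (ereal u * h x + ereal (1 - u) * h y)"
    by (simp add: inner_simps add_left_mono)
  also have "\<dots> = ereal u * (ereal (c \<bullet> x) + h x) + ereal (1 - u) * (ereal (c \<bullet> y) + h y)"
    using h_proper[rule_format, of x] h_proper[rule_format, of y] u
    by (cases "h x"; cases "h y") (auto simp: algebra_simps)
  finally show "ereal (c \<bullet> (u *\<^sub>R x + (1 - u) *\<^sub>R y)) + h (u *\<^sub>R x + (1 - u) *\<^sub>R y)
      \<le> ereal u * (ereal (c \<bullet> x) + h x) + ereal (1 - u) * (ereal (c \<bullet> y) + h y)" .
qed

abbreviation quad_form :: "real^'n^'n \<Rightarrow> real^'n \<Rightarrow> real" where
  "quad_form P v \<equiv> v \<bullet> (P *v v)"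

lemma quad_form_convex_combination:
  "quad_form P (t *\<^sub>R a + (1-t) *\<^sub>R b)
     = t * quad_form P a + (1-t) * quad_form P b - t * (1-t) * quad_form P (a - b)"
  by (simp add: algebra_simps inner_simps power2_eq_square)

lemma quad_form_diff_commute: "quad_form P (x - y) = quad_form P (y - x)"
proof -
  have "x - y = (-1) *\<^sub>R (y - x)" by simp
  then show ?thesis by (simp only: matrix_vector_mult_scaleR inner_scaleR_left inner_scaleR_right)
qed

text \<open>Three-point property of a proximal point: if \<open>y\<close> minimizes
  \<open>h + \<frac>1\<over>2\<parallel>\<cdot> - x\<^sub>k\<parallel>\<^sup>2\<^sub>P\<close> on the segment towards \<open>z\<close>, then comparing with \<open>t z + (1-t) y\<close>,
  dividing by \<open>t\<close> and letting \<open>t \<rightarrow> 0\<close> gains the extra term \<open>\<frac>1\<over>2\<parallel>z - y\<parallel>\<^sup>2\<^sub>P\<close>.\<close>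
lemma prox_three_point:
  fixes h :: "real^'n \<Rightarrow> ereal" and P :: "real^'n^'n"
  assumes h_convex: "convex_ereal h" and h_proper: "\<forall>v. -\<infinity> < h v" and hz: "h z < \<infinity>"
    and y_min: "\<And>t. 0 < t \<Longrightarrow> t \<le> 1 \<Longrightarrow> h y + ereal (quad_form P (y - xk) / 2)
        \<le> h (t *\<^sub>R z + (1-t) *\<^sub>R y) + ereal (quad_form P (t *\<^sub>R z + (1-t) *\<^sub>R y - xk) / 2)"
  shows "h y < \<infinity>"
    and "real_of_ereal (h y) + quad_form P (y - xk) / 2 + quad_form P (z - y) / 2
         \<le> real_of_ereal (h z) + quad_form P (z - xk) / 2"
proof -
  from y_min[of 1] hz show hy: "h y < \<infinity>" by auto
  obtain Hy Hz where Hy: "h y = ereal Hy" and Hz: "h z = ereal Hz"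
    using hy hz h_proper[rule_format, of y] h_proper[rule_format, of z] by (cases "h y"; cases "h z") auto
  have "s * (quad_form P (z - y) / 2) \<le> Hz + quad_form P (z - xk) / 2 - (Hy + quad_form P (y - xk) / 2)"
    if s: "0 < s" "s < 1" for s
proof -
    define t where "t = 1 - s"
    have t: "0 < t" "t < 1" using s by (simp_all add: t_def)
    have seg: "t *\<^sub>R z + (1-t) *\<^sub>R y - xk = t *\<^sub>R (z - xk) + (1-t) *\<^sub>R (y - xk)"
      by (simp add: algebra_simps)
    have "ereal (Hy + quad_form P (y - xk) / 2)
        \<le> h (t *\<^sub>R z + (1-t) *\<^sub>R y) + ereal (quad_form P (t *\<^sub>R z + (1-t) *\<^sub>R y - xk) / 2)"
      using y_min[of t] t by (simp add: Hy)
    also have "\<dots> \<le> ereal t * h z + ereal (1-t) * h y + ereal (quad_form P (t *\<^sub>R z + (1-t) *\<^sub>R y - xk) / 2)"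
      using h_convex t unfolding convex_ereal_def by (intro add_right_mono) auto
    finally have "Hy + quad_form P (y - xk) / 2
        \<le> t * Hz + (1-t) * Hy + quad_form P (t *\<^sub>R (z - xk) + (1-t) *\<^sub>R (y - xk)) / 2"
      by (simp add: Hy Hz seg)
    then have "t * (Hy + quad_form P (y - xk) / 2 + (1-t) * quad_form P (z - y) / 2)
        \<le> t * (Hz + quad_form P (z - xk) / 2)"
      unfolding quad_form_convex_combination by (simp add: field_simps)
    then have "Hy + quad_form P (y - xk) / 2 + (1-t) * quad_form P (z - y) / 2
        \<le> Hz + quad_form P (z - xk) / 2"
      using t(1) by (rule mult_left_le_imp_le)
    then show ?thesis by (simp add: t_def)
  qed
  then have "quad_form P (z - y) / 2 \<le> Hz + quad_form P (z - xk) / 2 - (Hy + quad_form P (y - xk) / 2)"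
    by (rule field_le_mult_one_interval)
  then show "real_of_ereal (h y) + quad_form P (y - xk) / 2 + quad_form P (z - y) / 2
         \<le> real_of_ereal (h z) + quad_form P (z - xk) / 2"
    by (simp add: Hy Hz)
qed

section \<open>Block structure\<close>

lemma blockU_idem [simp]: "blockU blk i (blockU blk i y) = blockU blk i y"
  by (simp add: blockU_def vec_eq_iff)

lemma blockU_add: "blockU blk i (u + v) = blockU blk i u + blockU blk i v"
  by (simp add: blockU_def vec_eq_iff)

lemma blockU_diff: "blockU blk i (u - v) = blockU blk i u - blockU blk i v"
  by (simp add: blockU_def vec_eq_iff)

lemma blockU_scaleR: "blockU blk i (t *\<^sub>R u) = t *\<^sub>R blockU blk i u"
  by (simp add: blockU_def vec_eq_iff)

lemma blockU_inner: "blockU blk i u \<bullet> v = u \<bullet> blockU blk i v"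
  unfolding inner_vec_def by (intro sum.cong) (auto simp: blockU_def)

lemma blockU_eq_iff: "blockU blk i v = v \<longleftrightarrow> (\<forall>j. blk j \<noteq> i \<longrightarrow> v $ j = 0)"
  by (auto simp: blockU_def vec_eq_iff)

lemma sum_blockU:
  assumes "\<forall>j. blk j < m"
  shows "(\<Sum>i<m. blockU blk i y) = y"
proof -
  have "(\<Sum>i<m. blockU blk i y) $ j = y $ j" for j
    using assms by (simp add: sum_component blockU_def sum.delta)
  then show ?thesis by (simp add: vec_eq_iff)
qed

lemma block_fun_shift:
  assumes "block_fun blk i h"
  shows "h (xk + blockU blk i (x - xk)) = h x"
  using assms unfolding block_fun_def by (auto simp: blockU_def)

lemma block_descent:
  fixes f :: "real^'n \<Rightarrow> real"
  assumes f_grad: "\<forall>z. (f has_derivative (\<lambda>h. gradf z \<bullet> h)) (at z)"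
    and Lip: "\<forall>z y. norm (blockU blk i (gradf (z + blockU blk i y) - gradf z)) \<le> L * norm (blockU blk i y)"
    and d: "blockU blk i d = d"
  shows "f (xk + d) \<le> f xk + gradf xk \<bullet> d + L/2 * (norm d)\<^sup>2"
proof -
  define \<phi> where "\<phi> t = f (xk + t *\<^sub>R d) - t * (gradf xk \<bullet> d) - L/2 * t\<^sup>2 * (norm d)\<^sup>2" for t
  have D1: "((\<lambda>t. f (xk + t *\<^sub>R d)) has_real_derivative (gradf (xk + t *\<^sub>R d) \<bullet> d)) (at t)" for t
proof -
    have "((\<lambda>t. xk + t *\<^sub>R d) has_derivative (\<lambda>h. h *\<^sub>R d)) (at t)"
      by (auto intro!: derivative_eq_intros)
    from has_derivative_compose[OF this f_grad[rule_format]]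
    have "((\<lambda>t. f (xk + t *\<^sub>R d)) has_derivative (\<lambda>h. gradf (xk + t *\<^sub>R d) \<bullet> (h *\<^sub>R d))) (at t)"
      by simp
    moreover have "(\<lambda>h. gradf (xk + t *\<^sub>R d) \<bullet> (h *\<^sub>R d)) = (*) (gradf (xk + t *\<^sub>R d) \<bullet> d)"
      by (auto simp: mult.commute)
    ultimately show ?thesis by (simp add: has_field_derivative_def)
  qed
  have D: "(\<phi> has_real_derivative (gradf (xk + t *\<^sub>R d) \<bullet> d - gradf xk \<bullet> d - L * t * (norm d)\<^sup>2)) (at t)" for t
    unfolding \<phi>_def by (rule derivative_eq_intros D1 refl | simp)+
  have "gradf (xk + t *\<^sub>R d) \<bullet> d - gradf xk \<bullet> d \<le> L * t * (norm d)\<^sup>2" if t: "0 \<le> t" for t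
proof -
    have "gradf (xk + t *\<^sub>R d) \<bullet> d - gradf xk \<bullet> d
        = blockU blk i (gradf (xk + blockU blk i (t *\<^sub>R d)) - gradf xk) \<bullet> d"
      using d by (simp add: inner_diff_left blockU_inner blockU_scaleR flip: inner_diff_left)
    also have "\<dots> \<le> norm (blockU blk i (gradf (xk + blockU blk i (t *\<^sub>R d)) - gradf xk)) * norm d"
      by (rule norm_cauchy_schwarz)
    also have "\<dots> \<le> L * norm (blockU blk i (t *\<^sub>R d)) * norm d"
      using Lip by (intro mult_right_mono) auto
    also have "\<dots> = L * t * (norm d)\<^sup>2" using d t by (simp add: blockU_scaleR power2_eq_square)
    finally show ?thesis .
  qed
  then have "\<phi> 1 \<le> \<phi> 0"
    using D by (intro DERIV_nonpos_imp_nonincreasing[of 0 1]) force+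
  then show ?thesis by (simp add: \<phi>_def)
qed

lemma blockdiag_cross:
  fixes P :: "real^'n^'n"
  assumes P_blkdiag: "\<forall>j l. blk j \<noteq> blk l \<longrightarrow> P $ j $ l = 0"
  shows "blockU blk i u \<bullet> (P *v (v - blockU blk i v)) = 0"
proof -
  have "blockU blk i u \<bullet> (P *v (v - blockU blk i v)) =
     (\<Sum>j\<in>UNIV. (if blk j = i then u $ j else 0) * (\<Sum>l\<in>UNIV. P $ j $ l * (if blk l = i then 0 else v $ l)))"
    unfolding inner_vec_def matrix_vector_mult_def by (auto simp: blockU_def intro!: sum.cong)
  also have "\<dots> = 0"
    using P_blkdiag by (intro sum.neutral ballI) (auto intro!: sum.neutral)
  finally show ?thesis .
qed

lemma blockdiag_quad_form_split:
  fixes P :: "real^'n^'n"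
  assumes P_blkdiag: "\<forall>j l. blk j \<noteq> blk l \<longrightarrow> P $ j $ l = 0"
  shows "quad_form P y = quad_form P (blockU blk i y) + quad_form P (y - blockU blk i y)"
proof -
  define u where "u = blockU blk i y"
  define v where "v = y - blockU blk i y"
  have "u \<bullet> (P *v v) = 0" unfolding u_def v_def by (rule blockdiag_cross[OF P_blkdiag])
  moreover have "v \<bullet> (P *v u) = 0"
proof -
    have "v \<bullet> (P *v u) = u \<bullet> (transpose P *v v)"
      by (simp add: dot_lmul_matrix[symmetric] vector_transpose_matrix inner_commute)
    also have "\<dots> = 0"
      unfolding u_def v_def using P_blkdiag by (intro blockdiag_cross) (simp add: transpose_def)
    finally show ?thesis .
  qed
  ultimately have "quad_form P (u + v) = quad_form P u + quad_form P v"
    by (simp add: algebra_simps inner_simps)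
  then show ?thesis by (simp add: u_def v_def)
qed

lemma blockU_linear_term:
  fixes A :: "real^'n^'q::finite"
  assumes d: "blockU blk i d = d"
  shows "blockU blk i (\<gamma> - transpose A *v \<mu>) \<bullet> (blockU blk i (x - xk) - d)
      = blockU blk i \<gamma> \<bullet> (x - xk) - \<gamma> \<bullet> d + \<mu> \<bullet> (A *v d) + \<mu> \<bullet> (A *v blockU blk i (xk - x))"
proof -
  define e where "e = blockU blk i (x - xk)"
  have "blockU blk i (e - d) = e - d" using d by (simp add: e_def blockU_diff)
  then have "blockU blk i (\<gamma> - transpose A *v \<mu>) \<bullet> (e - d) = (\<gamma> - transpose A *v \<mu>) \<bullet> (e - d)"
    by (simp only: blockU_inner)
  also have "\<dots> = \<gamma> \<bullet> e - \<gamma> \<bullet> d - \<mu> \<bullet> (A *v e) + \<mu> \<bullet> (A *v d)"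
    by (simp add: inner_diff_left inner_diff_right dot_lmul_matrix)
  also have "A *v e = - (A *v blockU blk i (xk - x))"
    by (metis blockU_diff e_def matrix_vector_mult_diff_distrib minus_diff_eq)
  finally show ?thesis by (simp add: e_def blockU_inner)
qed

text \<open>The \<open>x\<close>-update of Algorithm 1, with \<open>h\<close> the linearized objective of block \<open>i\<close>.\<close>
definition block_prox :: "('n \<Rightarrow> nat) \<Rightarrow> real^'n^'n \<Rightarrow> nat \<Rightarrow> (real^'n \<Rightarrow> ereal)
    \<Rightarrow> real^'n \<Rightarrow> real^'n \<Rightarrow> bool" where
  "block_prox blk P i h xk y \<longleftrightarrow> (\<forall>j. blk j \<noteq> i \<longrightarrow> y $ j = xk $ j) \<and>
     (\<forall>z. (\<forall>j. blk j \<noteq> i \<longrightarrow> z $ j = xk $ j) \<longrightarrow>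
        h y + ereal ((1/2) * quad_form P (y - xk)) \<le> h z + ereal ((1/2) * quad_form P (z - xk)))"

lemma block_prox_three_point:
  assumes prox: "block_prox blk P i (\<lambda>v. ereal (c \<bullet> v) + h v) xk y"
    and h_convex: "convex_ereal h" and h_proper: "\<forall>v. -\<infinity> < h v"
    and z: "\<forall>j. blk j \<noteq> i \<longrightarrow> z $ j = xk $ j" and hz: "h z < \<infinity>"
  shows "h y < \<infinity>"
    and "c \<bullet> y + real_of_ereal (h y) + quad_form P (y - xk) / 2 + quad_form P (z - y) / 2
         \<le> c \<bullet> z + real_of_ereal (h z) + quad_form P (z - xk) / 2"
proof -
  define \<phi> where "\<phi> v = ereal (c \<bullet> v) + h v" for v
  have \<phi>_proper: "\<forall>v. -\<infinity> < \<phi> v" using h_proper by (simp add: \<phi>_def)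
  have \<phi>_real: "real_of_ereal (\<phi> v) = c \<bullet> v + real_of_ereal (h v)" if "h v < \<infinity>" for v
    using that h_proper[rule_format, of v] by (cases "h v") (auto simp: \<phi>_def)
  have y_min: "\<phi> y + ereal (quad_form P (y - xk) / 2)
      \<le> \<phi> (t *\<^sub>R z + (1-t) *\<^sub>R y) + ereal (quad_form P (t *\<^sub>R z + (1-t) *\<^sub>R y - xk) / 2)" for t
proof -
    have "\<forall>j. blk j \<noteq> i \<longrightarrow> (t *\<^sub>R z + (1-t) *\<^sub>R y) $ j = xk $ j"
      using prox z by (auto simp: block_prox_def algebra_simps)
    then show ?thesis using prox unfolding block_prox_def \<phi>_def by simp
  qed
  have "\<phi> z < \<infinity>" using hz h_proper[rule_format, of z] by (cases "h z") (auto simp: \<phi>_def)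
  moreover have "convex_ereal \<phi>"
    unfolding \<phi>_def by (rule convex_ereal_add_linear[OF h_convex h_proper])
  ultimately have three: "\<phi> y < \<infinity>" "real_of_ereal (\<phi> y) + quad_form P (y - xk) / 2
      + quad_form P (z - y) / 2 \<le> real_of_ereal (\<phi> z) + quad_form P (z - xk) / 2"
    using prox_three_point[OF _ \<phi>_proper _ y_min] by auto
  show hy: "h y < \<infinity>" using three(1) by (simp add: \<phi>_def)
  show "c \<bullet> y + real_of_ereal (h y) + quad_form P (y - xk) / 2 + quad_form P (z - y) / 2
         \<le> c \<bullet> z + real_of_ereal (h z) + quad_form P (z - xk) / 2"
    using three(2) by (simp add: \<phi>_real[OF hy] \<phi>_real[OF hz])
qed

lemma block_prox_finite:
  assumes prox: "block_prox blk P i (\<lambda>v. ereal (c \<bullet> v) + h v) xk y"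
    and h: "block_fun blk i h" "proper_fun h" "convex_ereal h"
  shows "h y < \<infinity>"
proof -
  obtain x where "h x < \<infinity>" using h(2) by (auto simp: proper_fun_def)
  then have "h (xk + blockU blk i (x - xk)) < \<infinity>" using block_fun_shift[OF h(1)] by simp
  moreover have "\<forall>j. blk j \<noteq> i \<longrightarrow> (xk + blockU blk i (x - xk)) $ j = xk $ j"
    by (simp add: blockU_def)
  moreover have "\<forall>v. -\<infinity> < h v" using h(2) by (simp add: proper_fun_def)
  ultimately show ?thesis using block_prox_three_point(1)[OF prox h(3)] by blast
qed

lemma block_prox_unique:
  assumes prox1: "block_prox blk P i (\<lambda>v. ereal (c \<bullet> v) + h v) xk y1"
    and prox2: "block_prox blk P i (\<lambda>v. ereal (c \<bullet> v) + h v) xk y2"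
    and h: "block_fun blk i h" "proper_fun h" "convex_ereal h"
    and P_pos: "\<forall>v. v \<noteq> 0 \<longrightarrow> blockU blk i v = v \<longrightarrow> 0 < quad_form P v"
  shows "y1 = y2"
proof -
  have h_proper: "\<forall>v. -\<infinity> < h v" using h(2) by (simp add: proper_fun_def)
  have fin: "h y1 < \<infinity>" "h y2 < \<infinity>"
    using block_prox_finite[OF prox1 h] block_prox_finite[OF prox2 h] by simp_all
  have adm: "\<forall>j. blk j \<noteq> i \<longrightarrow> y1 $ j = xk $ j" "\<forall>j. blk j \<noteq> i \<longrightarrow> y2 $ j = xk $ j"
    using prox1 prox2 by (simp_all add: block_prox_def)
  have "quad_form P (y2 - y1) / 2 + quad_form P (y1 - y2) / 2 \<le> 0"
    using block_prox_three_point(2)[OF prox1 h(3) h_proper adm(2) fin(2)]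
      block_prox_three_point(2)[OF prox2 h(3) h_proper adm(1) fin(1)] by linarith
  moreover have "quad_form P (y2 - y1) = quad_form P (y1 - y2)"
    by (simp add: algebra_simps inner_simps)
  moreover have "blockU blk i (y1 - y2) = y1 - y2"
    using adm by (simp add: blockU_eq_iff)
  ultimately show ?thesis
    using P_pos[rule_format, of "y1 - y2"] by fastforce
qed

section \<open>Uniformly random index paths\<close>

definition index_path :: "(nat \<Rightarrow> 'w \<Rightarrow> nat) \<Rightarrow> nat \<Rightarrow> 'w \<Rightarrow> nat list" where
  "index_path idx n w = map (\<lambda>j. idx j w) [0..<n]"

abbreviation index_paths :: "nat \<Rightarrow> nat \<Rightarrow> nat list set" where
  "index_paths m n \<equiv> {p. set p \<subseteq> {..<m} \<and> length p = n}"

lemma index_path_Suc: "index_path idx (Suc n) w = index_path idx n w @ [idx n w]"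
  by (simp add: index_path_def)

lemma index_path_eq_iff: "index_path idx n w = p \<longleftrightarrow> length p = n \<and> (\<forall>j<n. idx j w = p ! j)"
  by (auto simp: index_path_def list_eq_iff_nth_eq)

lemma index_paths_Suc:
  "index_paths m (Suc n) = (\<lambda>(q, i). q @ [i]) ` (index_paths m n \<times> {..<m})"
proof (intro set_eqI iffI)
  fix p assume p: "p \<in> index_paths m (Suc n)"
  then have "p \<noteq> []" by auto
  then have "p = butlast p @ [last p]" "last p \<in> set p" by simp_all
  moreover have "butlast p \<in> index_paths m n" using p by (auto dest: in_set_butlastD)
  ultimately show "p \<in> (\<lambda>(q, i). q @ [i]) ` (index_paths m n \<times> {..<m})"
    using p by (intro image_eqI[where x="(butlast p, last p)"]) auto
qed auto

lemma sum_index_paths_Suc: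
  "(\<Sum>p\<in>index_paths m (Suc n). H p) = (\<Sum>q\<in>index_paths m n. \<Sum>i<m. H (q @ [i]))"
proof -
  have inj: "inj_on (\<lambda>(q, i). q @ [i]) (index_paths m n \<times> {..<m})"
    by (auto simp: inj_on_def)
  show ?thesis
    unfolding index_paths_Suc sum.reindex[OF inj] by (simp add: sum.cartesian_product case_prod_beta)
qed

context prob_space
begin

lemma events_index_path:
  assumes indep: "indep_vars (\<lambda>_. count_space UNIV) idx UNIV"
  shows "{w \<in> space M. index_path idx n w = p} \<in> events"
proof (cases "length p = n")
  case True
  have "{w \<in> space M. idx j w = c} \<in> events" for j c
proof -
    have "random_variable (count_space UNIV) (idx j)" using indep unfolding indep_vars_def2 by auto
    then have "idx j -` {c} \<inter> space M \<in> events" by (rule measurable_sets) simp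
    moreover have "idx j -` {c} \<inter> space M = {w \<in> space M. idx j w = c}" by auto
    ultimately show ?thesis by simp
  qed
  moreover have "{w \<in> space M. index_path idx n w = p}
      = space M \<inter> (\<Inter>j\<in>{..<n}. {w \<in> space M. idx j w = p ! j})"
    using True by (auto simp: index_path_eq_iff)
  ultimately show ?thesis by auto
qed (auto simp: index_path_eq_iff)

lemma prob_index_path:
  assumes indep: "indep_vars (\<lambda>_. count_space UNIV) idx UNIV"
    and unif: "\<forall>k i. i < m \<longrightarrow> prob {w \<in> space M. idx k w = i} = 1 / real m"
    and p: "p \<in> index_paths m n"
  shows "prob {w \<in> space M. index_path idx n w = p} = (1 / real m) ^ n"
proof (cases "n = 0")
  case True
  with p show ?thesis by (simp add: index_path_def prob_space)
next
  case False
  define B where "B j = idx j -` {p ! j} \<inter> space M" for j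
  have "indep_sets (\<lambda>j. {idx j -` A \<inter> space M | A. A \<in> sets (count_space UNIV)}) UNIV"
    using indep unfolding indep_vars_def2 by auto
  then have "prob (\<Inter>j\<in>{..<n}. B j) = (\<Prod>j\<in>{..<n}. prob (B j))"
    using False by (intro indep_setsD) (auto simp: B_def)
  also have "\<dots> = (\<Prod>j\<in>{..<n}. 1 / real m)"
  proof (intro prod.cong refl)
    fix j assume "j \<in> {..<n}"
    then have "B j = {w \<in> space M. idx j w = p ! j}" "p ! j < m"
      using p nth_mem by (fastforce simp: B_def)+
    then show "prob (B j) = 1 / real m" using unif by simp
  qed
  moreover have "{w \<in> space M. index_path idx n w = p} = (\<Inter>j\<in>{..<n}. B j)"
    using p False by (auto simp: index_path_eq_iff B_def)
  ultimately show ?thesis by simp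
qed

lemma integral_index_path:
  assumes indep: "indep_vars (\<lambda>_. count_space UNIV) idx UNIV"
    and unif: "\<forall>k i. i < m \<longrightarrow> prob {w \<in> space M. idx k w = i} = 1 / real m"
    and range: "\<forall>k. \<forall>w\<in>space M. idx k w < m"
  shows "integrable M (\<lambda>w. H (index_path idx n w))"
    and "(\<integral>w. H (index_path idx n w) \<partial>M) = (\<Sum>p\<in>index_paths m n. H p * (1 / real m) ^ n)"
proof -
  let ?E = "\<lambda>p. {w \<in> space M. index_path idx n w = p}"
  have fin: "finite (index_paths m n)" by (rule finite_lists_length_eq) simp
  have simple: "H (index_path idx n w) = (\<Sum>p\<in>index_paths m n. H p * indicator (?E p) w)"
    if w: "w \<in> space M" for w
proof -
    have "index_path idx n w \<in> index_paths m n" using range w by (auto simp: index_path_def)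
    moreover have "(\<Sum>p\<in>index_paths m n. H p * indicator (?E p) w)
        = (\<Sum>p\<in>index_paths m n. if p = index_path idx n w then H p else 0)"
      using w by (intro sum.cong refl) (auto simp: indicator_def)
    ultimately show ?thesis using fin by (simp add: sum.delta')
  qed
  have "integrable M (\<lambda>w. \<Sum>p\<in>index_paths m n. H p * indicator (?E p) w)"
    using events_index_path[OF indep]
    by (intro Bochner_Integration.integrable_sum integrable_mult_right integrable_real_indicator)
      (auto simp: less_top[symmetric])
  moreover have "integrable M (\<lambda>w. H (index_path idx n w))
      \<longleftrightarrow> integrable M (\<lambda>w. \<Sum>p\<in>index_paths m n. H p * indicator (?E p) w)"
    by (rule Bochner_Integration.integrable_cong) (simp_all add: simple)
  ultimately show "integrable M (\<lambda>w. H (index_path idx n w))" by simp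
  have "(\<integral>w. H (index_path idx n w) \<partial>M) = (\<integral>w. (\<Sum>p\<in>index_paths m n. H p * indicator (?E p) w) \<partial>M)"
    by (intro Bochner_Integration.integral_cong refl) (simp add: simple)
  also have "\<dots> = (\<Sum>p\<in>index_paths m n. H p * prob (?E p))"
    using events_index_path[OF indep]
    by (subst Bochner_Integration.integral_sum)
      (auto simp: less_top[symmetric] intro!: integrable_mult_right integrable_real_indicator)
  also have "\<dots> = (\<Sum>p\<in>index_paths m n. H p * (1 / real m) ^ n)"
    by (intro sum.cong refl) (simp add: prob_index_path[OF indep unif])
  finally show "(\<integral>w. H (index_path idx n w) \<partial>M) = (\<Sum>p\<in>index_paths m n. H p * (1 / real m) ^ n)" .
qed

text \<open>Given \<open>i\<^sub>0, \<dots>, i\<^sub>k\<^sub>-\<^sub>1\<close>, the index \<open>i\<^sub>k\<close> is still uniform, so averaging over the last index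
  of the path replaces \<open>D p i\<^sub>k\<close> by the mean of \<open>D p\<close> over the blocks.\<close>
lemma integral_centered_index_eq_0:
  fixes D :: "nat list \<Rightarrow> nat \<Rightarrow> real" and k :: nat
  assumes indep: "indep_vars (\<lambda>_. count_space UNIV) idx UNIV"
    and unif: "\<forall>k i. i < m \<longrightarrow> prob {w \<in> space M. idx k w = i} = 1 / real m"
    and range: "\<forall>k. \<forall>w\<in>space M. idx k w < m"
    and m: "m \<ge> 1"
  defines "X \<equiv> \<lambda>w. D (index_path idx k w) (idx k w) - (1 / real m) * (\<Sum>i<m. D (index_path idx k w) i)"
  shows "integrable M X" and "(\<integral>w. X w \<partial>M) = 0"
proof -
  define H where "H p = D (take k p) (p ! k) - (1 / real m) * (\<Sum>i<m. D (take k p) i)" for p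
  have X: "X = (\<lambda>w. H (index_path idx (Suc k) w))"
    by (simp add: X_def H_def index_path_Suc nth_append index_path_def)
  then show "integrable M X" using integral_index_path(1)[OF indep unif range] by simp
  have "(\<Sum>i<m. H (q @ [i])) = 0" if "q \<in> index_paths m k" for q
    using that m by (simp add: H_def nth_append sum_subtractf)
  then have "(\<Sum>q\<in>index_paths m k. (\<Sum>i<m. H (q @ [i])) * (1 / real m) ^ Suc k) = 0"
    by simp
  moreover have "(\<Sum>p\<in>index_paths m (Suc k). H p * (1 / real m) ^ Suc k)
      = (\<Sum>q\<in>index_paths m k. (\<Sum>i<m. H (q @ [i])) * (1 / real m) ^ Suc k)"
    unfolding sum_index_paths_Suc by (intro sum.cong refl) (rule sum_distrib_right[symmetric])
  ultimately show "(\<integral>w. X w \<partial>M) = 0"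
    unfolding X integral_index_path(2)[OF indep unif range] by simp
qed

end

text \<open>No measurability of \<open>Y\<close> is needed: \<open>\<integral>\<^sup>+\<close> is monotone on arbitrary functions.\<close>
lemma eexpectation_le_integral:
  fixes Y :: "'w \<Rightarrow> ereal" and Z :: "'w \<Rightarrow> real"
  assumes le: "\<forall>w\<in>space M. Y w \<le> ereal (Z w)" and int: "integrable M Z"
  shows "eexpectation M Y \<le> ereal (\<integral>w. Z w \<partial>M)"
proof -
  define A where "A = (\<integral>\<^sup>+ w. ennreal (Z w) \<partial>M)"
  define B where "B = (\<integral>\<^sup>+ w. ennreal (- Z w) \<partial>M)"
  have fin: "(\<integral>\<^sup>+ w. ennreal (norm (Z w)) \<partial>M) < \<infinity>" using int by (simp add: integrable_iff_bounded)
  have "A < \<infinity>" "B < \<infinity>" unfolding A_def B_def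
    by (rule le_less_trans[OF _ fin], intro nn_integral_mono ennreal_leI, simp)+
  then have AB: "enn2ereal A = ereal (enn2real A)" "enn2ereal B = ereal (enn2real B)"
    by (cases A rule: ennreal_cases; cases B rule: ennreal_cases; simp add: enn2real_def)+
  have "(\<integral>\<^sup>+ w. e2ennreal (Y w) \<partial>M) \<le> A" unfolding A_def
    using le by (intro nn_integral_mono) (metis e2ennreal_ereal e2ennreal_mono)
  moreover have "B \<le> (\<integral>\<^sup>+ w. e2ennreal (- Y w) \<partial>M)" unfolding B_def
  proof (intro nn_integral_mono)
    fix w assume "w \<in> space M"
    then have "ereal (- Z w) \<le> - Y w" using le ereal_minus_le_minus by fastforce
    then show "ennreal (- Z w) \<le> e2ennreal (- Y w)" by (metis e2ennreal_ereal e2ennreal_mono)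
  qed
  ultimately have "eexpectation M Y \<le> enn2ereal A - enn2ereal B"
    unfolding eexpectation_def
    by (intro ereal_minus_mono) (auto simp: less_eq_ennreal.rep_eq)
  also have "\<dots> = ereal (enn2real A - enn2real B)" by (simp add: AB)
  also have "enn2real A - enn2real B = (\<integral>w. Z w \<partial>M)"
    unfolding A_def B_def by (rule real_lebesgue_integral_def[OF int, symmetric])
  finally show ?thesis .
qed

section \<open>The randomized primal-dual block update\<close>

text \<open>The weights of the ergodic average \<open>(x\<^sup>K\<^sup>+\<^sup>1 + \<frac>1\<over>m \<Sum>\<^sub>k\<^sub>=\<^sub>1\<^sub>.\<^sub>.\<^sub>K x\<^sup>k) / (1 + K/m)\<close>.\<close>
definition ergodic_weight :: "nat \<Rightarrow> nat \<Rightarrow> nat \<Rightarrow> real" where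
  "ergodic_weight m K k = (if k = Suc K then 1 else 1 / real m) / (1 + real K / real m)"

lemma sum_ergodic_weight_scaleR:
  fixes v :: "nat \<Rightarrow> 'a::real_vector"
  shows "(\<Sum>k\<in>{1..Suc K}. ergodic_weight m K k *\<^sub>R v k)
     = (1 / (1 + real K / real m)) *\<^sub>R (v (Suc K) + (1 / real m) *\<^sub>R (\<Sum>k\<in>{1..K}. v k))"
proof -
  have "(\<Sum>k\<in>{1..K}. ergodic_weight m K k *\<^sub>R v k)
      = (1 / (1 + real K / real m)) *\<^sub>R (1 / real m) *\<^sub>R (\<Sum>k\<in>{1..K}. v k)"
    unfolding scaleR_sum_right by (rule sum.cong) (auto simp: ergodic_weight_def)
  then show ?thesis by (simp add: ergodic_weight_def scaleR_add_right)
qed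

lemma sum_ergodic_weight: "(\<Sum>k\<in>{1..Suc K}. ergodic_weight m K k) = 1"
proof -
  have "(\<Sum>k\<in>{1..Suc K}. ergodic_weight m K k) = (1 / (1 + real K / real m)) * (1 + real K / real m)"
    using sum_ergodic_weight_scaleR[of m K "\<lambda>_. 1::real"] by simp
  also have "\<dots> = 1"
    using add_pos_nonneg[of 1 "real K / real m"] by simp
  finally show ?thesis .
qed

lemma ergodic_weight_nonneg: "0 \<le> ergodic_weight m K k"
  by (simp add: ergodic_weight_def)

locale primal_dual_block_update = prob_space M
  for M :: "'w measure" +
  fixes m :: nat and blk :: "'n::finite \<Rightarrow> nat"
    and f :: "real^'n \<Rightarrow> real" and gradf :: "real^'n \<Rightarrow> real^'n"
    and g :: "nat \<Rightarrow> real^'n \<Rightarrow> ereal"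
    and A :: "real^'n^'q::finite" and b :: "real^'q"
    and L :: "nat \<Rightarrow> real" and P :: "real^'n^'n" and \<beta> \<rho> :: real
    and idx :: "nat \<Rightarrow> 'w \<Rightarrow> nat"
    and xs :: "nat \<Rightarrow> 'w \<Rightarrow> real^'n" and rs lams :: "nat \<Rightarrow> 'w \<Rightarrow> real^'q"
    and x0 :: "real^'n"
  assumes m_pos: "m \<ge> 1" and blk_range: "\<forall>j. blk j < m"
    and f_convex: "convex_on UNIV f"
    and f_grad: "\<forall>z. (f has_derivative (\<lambda>h. gradf z \<bullet> h)) (at z)"
    and g_block: "\<forall>i<m. block_fun blk i (g i)"
    and g_proper: "\<forall>i<m. proper_fun (g i)"
    and g_convex: "\<forall>i<m. convex_ereal (g i)"
    and L_pos: "\<forall>i<m. L i > 0"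
    and Lip_block: "\<forall>i<m. \<forall>z y. norm (blockU blk i (gradf (z + blockU blk i y) - gradf z))
                         \<le> L i * norm (blockU blk i y)"
    and P_blkdiag: "\<forall>j l. blk j \<noteq> blk l \<longrightarrow> P $ j $ l = 0"
    and P_psd: "\<forall>v. 0 \<le> quad_form P v"
    and P_bound: "\<forall>i<m. \<forall>v. v = blockU blk i v \<longrightarrow> L i * (norm v)\<^sup>2 + \<beta> * (norm (A *v v))\<^sup>2 \<le> quad_form P v"
    and beta_pos: "\<beta> > 0" and rho_pos: "0 < \<rho>" and rho_le: "\<rho> \<le> \<beta> / real m"
    and idx_indep: "indep_vars (\<lambda>_. count_space UNIV) idx UNIV"
    and idx_range: "\<forall>k. \<forall>w\<in>space M. idx k w < m"
    and idx_unif: "\<forall>k i. i < m \<longrightarrow> prob {w \<in> space M. idx k w = i} = 1 / real m"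
    and init_x: "\<forall>w\<in>space M. xs 0 w = x0"
    and init_r: "\<forall>w\<in>space M. rs 0 w = A *v x0 - b"
    and init_lam: "\<forall>w\<in>space M. lams 0 w = 0"
    and upd_prox: "\<forall>k. \<forall>w\<in>space M. block_prox blk P (idx k w)
        (\<lambda>z. ereal (blockU blk (idx k w) (gradf (xs k w) - transpose A *v (lams k w - \<beta> *\<^sub>R rs k w)) \<bullet> z)
             + g (idx k w) z) (xs k w) (xs (Suc k) w)"
    and upd_r: "\<forall>k. \<forall>w\<in>space M. rs (Suc k) w = rs k w + A *v (xs (Suc k) w - xs k w)"
    and upd_lam: "\<forall>k. \<forall>w\<in>space M. lams (Suc k) w = lams k w - \<rho> *\<^sub>R rs (Suc k) w"
begin

abbreviation g_real :: "nat \<Rightarrow> real^'n \<Rightarrow> real" where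
  "g_real j y \<equiv> real_of_ereal (g j y)"

text \<open>\<open>real_of_ereal\<close> sends \<open>\<infinity>\<close> to \<open>0\<close>, so \<open>F_real\<close> is \<open>F\<close> only where every \<open>g\<^sub>j\<close> is finite.\<close>
definition F_real :: "real^'n \<Rightarrow> real" where
  "F_real y = f y + (\<Sum>j<m. g_real j y)"

definition mult_aug :: "nat \<Rightarrow> 'w \<Rightarrow> real^'q" where
  "mult_aug k w = lams k w - \<beta> *\<^sub>R rs k w"

text \<open>The part of the one-step bound that depends on the updated block \<open>i\<close>.\<close>
definition block_gap :: "real^'n \<Rightarrow> nat \<Rightarrow> 'w \<Rightarrow> nat \<Rightarrow> real" where
  "block_gap x k w i = (\<Sum>j\<in>{..<m}-{i}. g_real j (xs k w) - g_real j x)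
      + blockU blk i (gradf (xs k w)) \<bullet> (x - xs k w) + mult_aug k w \<bullet> (A *v blockU blk i (xs k w - x))"

definition gap_noise :: "real^'n \<Rightarrow> nat \<Rightarrow> 'w \<Rightarrow> real" where
  "gap_noise x k w = block_gap x k w (idx k w) - (1 / real m) * (\<Sum>i<m. block_gap x k w i)"

lemma residual_eq:
  assumes "w \<in> space M"
  shows "rs k w = A *v xs k w - b"
  using assms by (induction k) (simp_all add: init_r init_x upd_r matrix_vector_mult_diff_distrib)

lemma multiplier_eq:
  assumes "w \<in> space M"
  shows "lams k w = - (\<rho> *\<^sub>R (\<Sum>j\<in>{1..k}. rs j w))"
  using assms by (induction k) (simp_all add: init_lam upd_lam algebra_simps)

lemma Fobj_eq_F_real:
  assumes "\<forall>j<m. \<bar>g j y\<bar> \<noteq> \<infinity>"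
  shows "Fobj f g m y = ereal (F_real y)"
proof -
  have "(\<Sum>j<m. g j y) = (\<Sum>j<m. ereal (g_real j y))"
    using assms by (intro sum.cong refl) auto
  then show ?thesis by (simp add: Fobj_def F_real_def)
qed

lemma g_finite_if_Fobj_finite:
  assumes "\<bar>Fobj f g m y\<bar> \<noteq> \<infinity>" and "j < m"
  shows "\<bar>g j y\<bar> \<noteq> \<infinity>"
proof
  assume "\<bar>g j y\<bar> = \<infinity>"
  then have "g j y = \<infinity>" using g_proper assms(2) by (auto simp: proper_fun_def)
  then have "(\<Sum>i<m. g i y) = \<infinity>" using assms(2) by (auto simp: sum_Pinfty)
  then show False using assms(1) by (simp add: Fobj_def)
qed

lemma prox_step_inequality:
  assumes w: "w \<in> space M" and x_fin: "\<bar>g (idx k w) x\<bar> \<noteq> \<infinity>"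
  defines "i \<equiv> idx k w" and "xk \<equiv> xs k w" and "xk1 \<equiv> xs (Suc k) w"
  defines "c \<equiv> blockU blk i (gradf xk - transpose A *v mult_aug k w)"
  shows "g_real i xk1 - g_real i x \<le> c \<bullet> (xk + blockU blk i (x - xk) - xk1)
          - quad_form P (xk1 - xk) / 2 + quad_form P (x - xk) / 2 - quad_form P (x - xk1) / 2"
proof -
  have i: "i < m" using idx_range w by (simp add: i_def)
  have prox: "block_prox blk P i (\<lambda>v. ereal (c \<bullet> v) + g i v) xk xk1"
    using upd_prox w by (simp add: i_def xk_def xk1_def c_def mult_aug_def)
  have keep: "\<forall>j. blk j \<noteq> i \<longrightarrow> xk1 $ j = xk $ j" using prox by (simp add: block_prox_def)
  define z where "z = xk + blockU blk i (x - xk)"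
  have gz: "g i z = g i x" unfolding z_def using g_block i by (simp add: block_fun_shift)
  have z_keep: "\<forall>j. blk j \<noteq> i \<longrightarrow> z $ j = xk $ j" by (simp add: z_def blockU_def)
  have g_i: "convex_ereal (g i)" "\<forall>v. -\<infinity> < g i v"
    using g_convex g_proper i by (auto simp: proper_fun_def)
  have gx: "g i z < \<infinity>" using x_fin gz by (cases "g i x") (auto simp: i_def)
  note three = block_prox_three_point[OF prox g_i z_keep gx]
  have "quad_form P (x - xk) - quad_form P (x - xk1) = quad_form P (z - xk) - quad_form P (z - xk1)"
proof -
    define d where "d = xk1 - xk"
    have d: "blockU blk i d = d" using keep by (simp add: d_def blockU_eq_iff)
    have xk1: "xk1 = xk + d" by (simp add: d_def)
    have rest: "x - xk1 - blockU blk i (x - xk1) = x - xk - blockU blk i (x - xk)"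
      using d by (simp add: xk1 blockU_diff blockU_add algebra_simps)
    have zk1: "z - xk1 = blockU blk i (x - xk1)"
      using d by (simp add: z_def xk1 blockU_diff blockU_add algebra_simps)
    have zk: "z - xk = blockU blk i (x - xk)" by (simp add: z_def)
    show ?thesis
      using blockdiag_quad_form_split[OF P_blkdiag, of "x - xk" i]
        blockdiag_quad_form_split[OF P_blkdiag, of "x - xk1" i] unfolding rest zk zk1 by linarith
  qed
  then show ?thesis
    using three(2) gz by (simp add: z_def inner_diff_right)
qed

lemma one_step_bound:
  assumes w: "w \<in> space M" and x_fin: "\<forall>j<m. \<bar>g j x\<bar> \<noteq> \<infinity>"
  shows "F_real (xs (Suc k) w) - F_real x \<le> f (xs k w) - f x + block_gap x k w (idx k w)
        + mult_aug k w \<bullet> (A *v (xs (Suc k) w - xs k w))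
        + quad_form P (x - xs k w) / 2 - quad_form P (x - xs (Suc k) w) / 2
        - \<beta>/2 * (norm (A *v (xs (Suc k) w - xs k w)))\<^sup>2"
proof -
  define i xk xk1 \<mu> where "i = idx k w" and "xk = xs k w" and "xk1 = xs (Suc k) w" and "\<mu> = mult_aug k w"
  define d where "d = xk1 - xk"
  have i: "i < m" using idx_range w by (simp add: i_def)
  have "\<bar>g (idx k w) x\<bar> \<noteq> \<infinity>" using x_fin i by (simp add: i_def)
  note prox_step = prox_step_inequality[OF w this, folded i_def xk_def xk1_def \<mu>_def]
  have keep: "\<forall>j. blk j \<noteq> i \<longrightarrow> xk1 $ j = xk $ j"
    using upd_prox w by (simp add: block_prox_def i_def xk_def xk1_def)
  then have d: "blockU blk i d = d" by (simp add: d_def blockU_eq_iff)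
  have shift: "xk + blockU blk i (x - xk) - xk1 = blockU blk i (x - xk) - d" by (simp add: d_def)
  have linear: "blockU blk i (gradf xk - transpose A *v \<mu>) \<bullet> (xk + blockU blk i (x - xk) - xk1)
      = blockU blk i (gradf xk) \<bullet> (x - xk) - gradf xk \<bullet> d + \<mu> \<bullet> (A *v d)
        + \<mu> \<bullet> (A *v blockU blk i (xk - x))"
    unfolding shift by (rule blockU_linear_term[OF d])
  have descent: "f xk1 \<le> f xk + gradf xk \<bullet> d + L i / 2 * (norm d)\<^sup>2"
    using block_descent[OF f_grad, of blk i "L i" d xk] Lip_block i d by (simp add: d_def)
  have P_d: "L i * (norm d)\<^sup>2 + \<beta> * (norm (A *v d))\<^sup>2 \<le> quad_form P d"
    using P_bound i d by simp
  have other_blocks: "(\<Sum>j\<in>{..<m}-{i}. g_real j xk1) = (\<Sum>j\<in>{..<m}-{i}. g_real j xk)"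
    using g_block keep unfolding block_fun_def by (intro sum.cong refl) (metis DiffE lessThan_iff singletonI)
  have split: "(\<Sum>j<m. g_real j y) = g_real i y + (\<Sum>j\<in>{..<m}-{i}. g_real j y)" for y
    using i by (simp add: sum.remove[of "{..<m}" i])
  have "F_real xk1 - F_real x
      = (f xk1 - f x) + (g_real i xk1 - g_real i x) + (\<Sum>j\<in>{..<m}-{i}. g_real j xk - g_real j x)"
    unfolding F_real_def split[of xk1] split[of x] other_blocks sum_subtractf by simp
  also have "\<dots> \<le> f xk - f x + ((\<Sum>j\<in>{..<m}-{i}. g_real j xk - g_real j x)
        + blockU blk i (gradf xk) \<bullet> (x - xk) + \<mu> \<bullet> (A *v blockU blk i (xk - x)))
      + \<mu> \<bullet> (A *v d) + quad_form P (x - xk) / 2 - quad_form P (x - xk1) / 2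
      - \<beta>/2 * (norm (A *v d))\<^sup>2"
    using prox_step[folded d_def] linear descent P_d by linarith
  finally show ?thesis
    by (simp add: block_gap_def i_def xk_def xk1_def \<mu>_def d_def)
qed

lemma average_block_gap:
  assumes w: "w \<in> space M" and x_feas: "A *v x = b"
  shows "(1 / real m) * (\<Sum>i<m. block_gap x k w i)
      = (1 - 1 / real m) * ((\<Sum>j<m. g_real j (xs k w)) - (\<Sum>j<m. g_real j x))
        + (1 / real m) * (gradf (xs k w) \<bullet> (x - xs k w)) + (1 / real m) * (mult_aug k w \<bullet> rs k w)"
proof -
  define c where "c j = g_real j (xs k w) - g_real j x" for j
  have "(\<Sum>i<m. \<Sum>j\<in>{..<m}-{i}. c j) = (real m - 1) * (\<Sum>j<m. c j)"
proof -
    have "(\<Sum>i<m. \<Sum>j\<in>{..<m}-{i}. c j) = (\<Sum>i<m. (\<Sum>j<m. c j) - c i)"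
      by (intro sum.cong refl) (simp add: sum_diff1)
    then show ?thesis by (simp add: sum_subtractf algebra_simps)
  qed
  moreover have "(\<Sum>i<m. blockU blk i (gradf (xs k w)) \<bullet> (x - xs k w)) = gradf (xs k w) \<bullet> (x - xs k w)"
    by (simp add: inner_sum_left[symmetric] sum_blockU[OF blk_range])
  moreover have "(\<Sum>i<m. mult_aug k w \<bullet> (A *v blockU blk i (xs k w - x))) = mult_aug k w \<bullet> rs k w"
proof -
    have "(\<Sum>i<m. mult_aug k w \<bullet> (A *v blockU blk i (xs k w - x)))
        = mult_aug k w \<bullet> (A *v (\<Sum>i<m. blockU blk i (xs k w - x)))"
      by (simp add: inner_sum_right linear_sum[OF matrix_vector_mul_linear])
    then show ?thesis
      using residual_eq[OF w] x_feas by (simp add: sum_blockU[OF blk_range] matrix_vector_mult_diff_distrib)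
  qed
  ultimately have "(\<Sum>i<m. block_gap x k w i)
      = (real m - 1) * (\<Sum>j<m. c j) + gradf (xs k w) \<bullet> (x - xs k w) + mult_aug k w \<bullet> rs k w"
    unfolding block_gap_def c_def[symmetric] sum.distrib by simp
  moreover have "(\<Sum>j<m. c j) = (\<Sum>j<m. g_real j (xs k w)) - (\<Sum>j<m. g_real j x)"
    by (simp add: c_def sum_subtractf)
  ultimately show ?thesis using m_pos by (simp add: field_simps)
qed

text \<open>Replacing \<open>block_gap\<close> by its average over the blocks (the error is \<open>gap_noise\<close>) and using
  the gradient inequality for \<open>f\<close> gives a contraction by the factor \<open>1 - 1/m\<close>.\<close>
lemma one_step_recursion:
  assumes w: "w \<in> space M" and x_feas: "A *v x = b" and x_fin: "\<forall>j<m. \<bar>g j x\<bar> \<noteq> \<infinity>"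
  shows "F_real (xs (Suc k) w) - F_real x \<le> (1 - 1 / real m) * (F_real (xs k w) - F_real x)
      + gap_noise x k w + mult_aug k w \<bullet> (rs (Suc k) w - (1 - 1 / real m) *\<^sub>R rs k w)
      + (quad_form P (x - xs k w) / 2 - quad_form P (x - xs (Suc k) w) / 2)
      - \<beta>/2 * inner (rs (Suc k) w - rs k w) (rs (Suc k) w - rs k w)"
proof -
  define a where "a = 1 - 1 / real m"
  define G where "G y = (\<Sum>j<m. g_real j y)" for y
  have "A *v (xs (Suc k) w - xs k w) = rs (Suc k) w - rs k w"
    using residual_eq[OF w] by (simp add: matrix_vector_mult_diff_distrib)
  then have step: "F_real (xs (Suc k) w) - F_real x \<le> f (xs k w) - f x + block_gap x k w (idx k w)
        + mult_aug k w \<bullet> (rs (Suc k) w - rs k w)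
        + quad_form P (x - xs k w) / 2 - quad_form P (x - xs (Suc k) w) / 2
        - \<beta>/2 * inner (rs (Suc k) w - rs k w) (rs (Suc k) w - rs k w)"
    using one_step_bound[OF w x_fin, of k] by (simp add: power2_norm_eq_inner)
  have "(1 / real m) * (gradf (xs k w) \<bullet> (x - xs k w)) \<le> (1 / real m) * (f x - f (xs k w))"
    using convex_on_gradient_ineq[OF f_convex f_grad, of "xs k w" x] m_pos by (simp add: divide_right_mono)
  moreover have "mult_aug k w \<bullet> (rs (Suc k) w - a *\<^sub>R rs k w)
      = mult_aug k w \<bullet> (rs (Suc k) w - rs k w) + (1 / real m) * (mult_aug k w \<bullet> rs k w)"
    by (simp add: a_def inner_simps algebra_simps)
  moreover have "f (xs k w) - f x + (1 / real m) * (f x - f (xs k w)) = a * (f (xs k w) - f x)"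
    by (simp add: a_def algebra_simps)
  moreover have "a * (F_real (xs k w) - F_real x) = a * (f (xs k w) - f x) + a * (G (xs k w) - G x)"
    by (simp add: F_real_def G_def algebra_simps)
  ultimately show ?thesis
    using step average_block_gap[OF w x_feas, of k] unfolding gap_noise_def a_def[symmetric] G_def[symmetric]
    by linarith
qed

lemma pathwise_bound:
  assumes w: "w \<in> space M" and x_feas: "A *v x = b" and x_fin: "\<forall>j<m. \<bar>g j x\<bar> \<noteq> \<infinity>"
  shows "(F_real (xs (Suc K) w) - F_real x) + (1 / real m) * (\<Sum>k\<in>{1..K}. F_real (xs k w) - F_real x)
      - lam \<bullet> (rs (Suc K) w + (1 / real m) *\<^sub>R (\<Sum>j\<in>{1..K}. rs j w))
    \<le> (1 - 1 / real m) * (F_real x0 - F_real x) + quad_form P (x - x0) / 2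
      + (\<beta>/2 - \<beta>/real m) * inner (rs 0 w) (rs 0 w) + inner lam lam / (2 * real m * \<rho>)
      + (\<Sum>k\<le>K. gap_noise x k w)"
proof -
  define a where "a = 1 - 1 / real m"
  define F where "F k = F_real (xs k w) - F_real x" for k
  define E where "E k = mult_aug k w \<bullet> (rs (Suc k) w - a *\<^sub>R rs k w)
      - \<beta>/2 * inner (rs (Suc k) w - rs k w) (rs (Suc k) w - rs k w)" for k
  define Q where "Q k = quad_form P (x - xs k w) / 2" for k
  have "F (Suc k) \<le> a * F k + gap_noise x k w + E k + (Q k - Q (Suc k))" for k
    using one_step_recursion[OF w x_feas x_fin, of k] unfolding F_def E_def Q_def a_def by linarith
  then have "(\<Sum>k\<le>K. F (Suc k)) \<le> (\<Sum>k\<le>K. a * F k + gap_noise x k w + E k + (Q k - Q (Suc k)))"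
    by (intro sum_mono)
  also have "\<dots> = a * (\<Sum>k\<le>K. F k) + (\<Sum>k\<le>K. gap_noise x k w) + (\<Sum>k\<le>K. E k) + (Q 0 - Q (Suc K))"
    by (simp add: sum.distrib sum_distrib_left sum_telescope)
  moreover have "(\<Sum>k\<le>n. h (Suc k)) = (\<Sum>k\<in>{1..n}. h k) + h (Suc n)"
    and "(\<Sum>k\<le>n. h k) = h 0 + (\<Sum>k\<in>{1..n}. h k)" for n and h :: "nat \<Rightarrow> real"
    by (induction n) simp_all
  ultimately have telescoped: "(\<Sum>k\<in>{1..K}. F k) + F (Suc K)
      \<le> a * (F 0 + (\<Sum>k\<in>{1..K}. F k)) + (\<Sum>k\<le>K. gap_noise x k w) + (\<Sum>k\<le>K. E k) + (Q 0 - Q (Suc K))"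
    by simp
  have "(\<Sum>k\<le>K. E k) - lam \<bullet> (rs (Suc K) w + (1 / real m) *\<^sub>R (\<Sum>j\<in>{1..K}. rs j w))
      \<le> (\<beta>/2 - \<beta>/real m) * inner (rs 0 w) (rs 0 w) + inner lam lam / (2 * real m * \<rho>)"
    using multiplier_sum_bound[OF m_pos rho_pos rho_le, of "\<lambda>k. rs k w" K lam]
    by (simp add: E_def a_def mult_aug_def multiplier_eq[OF w])
  moreover have "Q 0 = quad_form P (x - x0) / 2" "Q (Suc K) \<ge> 0"
    using init_x w P_psd by (simp_all add: Q_def)
  moreover have "a * (F 0 + (\<Sum>k\<in>{1..K}. F k))
      = a * F 0 + (\<Sum>k\<in>{1..K}. F k) - (1 / real m) * (\<Sum>k\<in>{1..K}. F k)"
    by (simp add: a_def algebra_simps)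
  ultimately have "F (Suc K) + (1 / real m) * (\<Sum>k\<in>{1..K}. F k)
      - lam \<bullet> (rs (Suc K) w + (1 / real m) *\<^sub>R (\<Sum>j\<in>{1..K}. rs j w))
    \<le> a * F 0 + quad_form P (x - x0) / 2
      + (\<beta>/2 - \<beta>/real m) * inner (rs 0 w) (rs 0 w) + inner lam lam / (2 * real m * \<rho>)
      + (\<Sum>k\<le>K. gap_noise x k w)"
    using telescoped by linarith
  moreover have "F 0 = F_real x0 - F_real x" using init_x w by (simp add: F_def)
  ultimately show ?thesis by (simp add: F_def a_def)
qed

lemma prox_step_finite:
  assumes "w \<in> space M"
  shows "g (idx k w) (xs (Suc k) w) < \<infinity>"
proof -
  have "idx k w < m" using idx_range assms by blast
  then show ?thesis
    using block_prox_finite[OF upd_prox[rule_format, OF assms, of k]] g_block g_proper g_convex by simp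
qed

lemma quad_form_pos_on_block:
  assumes "i < m" and "v \<noteq> 0" and "blockU blk i v = v"
  shows "0 < quad_form P v"
proof -
  have "0 < L i * (norm v)\<^sup>2" using assms L_pos by simp
  moreover have "0 \<le> \<beta> * (norm (A *v v))\<^sup>2" using beta_pos by simp
  moreover have "L i * (norm v)\<^sup>2 + \<beta> * (norm (A *v v))\<^sup>2 \<le> quad_form P v"
    using P_bound assms(1,3) by simp
  ultimately show ?thesis by linarith
qed

text \<open>The state after \<open>k\<close> steps is a function of \<open>i\<^sub>0, \<dots>, i\<^sub>k\<^sub>-\<^sub>1\<close>; this replaces any
  measurability assumption on the iterates.\<close>
lemma iterates_determined_by_index_path:
  assumes "w \<in> space M" "w' \<in> space M" "index_path idx k w = index_path idx k w'"
  shows "xs k w = xs k w' \<and> rs k w = rs k w' \<and> lams k w = lams k w'"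
  using assms(3)
proof (induction k)
  case 0
  show ?case using init_x init_r init_lam assms(1,2) by simp
next
  case (Suc k)
  then have state: "xs k w' = xs k w" "rs k w' = rs k w" "lams k w' = lams k w"
    and i: "idx k w' = idx k w"
    by (simp_all add: index_path_Suc)
  have "xs (Suc k) w = xs (Suc k) w'"
  proof (rule block_prox_unique)
    show "block_prox blk P (idx k w) (\<lambda>z. ereal (blockU blk (idx k w)
        (gradf (xs k w) - transpose A *v (lams k w - \<beta> *\<^sub>R rs k w)) \<bullet> z) + g (idx k w) z) (xs k w) (xs (Suc k) w)"
      using upd_prox assms(1) by blast
    show "block_prox blk P (idx k w) (\<lambda>z. ereal (blockU blk (idx k w)
        (gradf (xs k w) - transpose A *v (lams k w - \<beta> *\<^sub>R rs k w)) \<bullet> z) + g (idx k w) z) (xs k w) (xs (Suc k) w')"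
      using upd_prox[rule_format, of w' k] assms(2) unfolding state i by blast
  next
    have "idx k w < m" using idx_range assms(1) by blast
    then show "block_fun blk (idx k w) (g (idx k w))" "proper_fun (g (idx k w))"
      "convex_ereal (g (idx k w))" "\<forall>v. v \<noteq> 0 \<longrightarrow> blockU blk (idx k w) v = v \<longrightarrow> 0 < quad_form P v"
      using g_block g_proper g_convex quad_form_pos_on_block by simp_all
  qed
  then show ?case using assms(1,2) state by (simp add: upd_r upd_lam)
qed

lemma gap_noise_integral:
  shows "integrable M (gap_noise x k)" and "(\<integral>w. gap_noise x k w \<partial>M) = 0"
proof -
  define rep where "rep p = (SOME w. w \<in> space M \<and> index_path idx k w = p)" for p
  define D where "D p i = block_gap x k (rep p) i" for p i
  have "block_gap x k w i = D (index_path idx k w) i" if w: "w \<in> space M" for w i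
proof -
    have "rep (index_path idx k w) \<in> space M \<and> index_path idx k (rep (index_path idx k w)) = index_path idx k w"
      unfolding rep_def by (rule someI_ex) (use w in blast)
    then show ?thesis
      using iterates_determined_by_index_path[OF w] by (force simp: D_def block_gap_def mult_aug_def)
  qed
  then have cong: "gap_noise x k w
      = D (index_path idx k w) (idx k w) - (1 / real m) * (\<Sum>i<m. D (index_path idx k w) i)"
    if "w \<in> space M" for w
    using that by (simp add: gap_noise_def)
  have "integrable M (gap_noise x k) \<longleftrightarrow>
      integrable M (\<lambda>w. D (index_path idx k w) (idx k w) - (1 / real m) * (\<Sum>i<m. D (index_path idx k w) i))"
    by (rule Bochner_Integration.integrable_cong) (simp_all add: cong)
  then show "integrable M (gap_noise x k)"
    using integral_centered_index_eq_0(1)[OF idx_indep idx_unif idx_range m_pos, of D k] by simp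
  have "(\<integral>w. gap_noise x k w \<partial>M)
      = (\<integral>w. D (index_path idx k w) (idx k w) - (1 / real m) * (\<Sum>i<m. D (index_path idx k w) i) \<partial>M)"
    by (rule Bochner_Integration.integral_cong) (simp_all add: cong)
  then show "(\<integral>w. gap_noise x k w \<partial>M) = 0"
    using integral_centered_index_eq_0(2)[OF idx_indep idx_unif idx_range m_pos, of D k] by simp
qed

text \<open>For \<open>m = 1\<close> the first step replaces all of \<open>x\<^sup>0\<close>, which may then lie outside the domain.\<close>
lemma g_finite_iterates:
  assumes x0_fin: "m = 1 \<or> (\<forall>j<m. g j x0 < \<infinity>)" and w: "w \<in> space M" and j: "j < m"
  shows "\<bar>g j (xs (Suc k) w)\<bar> \<noteq> \<infinity>"
proof -
  have "g j (xs (Suc k) w) < \<infinity>"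
  proof (induction k)
    case 0
    show ?case
    proof (cases "j = idx 0 w")
      case False
      then have "m \<noteq> 1" using j idx_range w by fastforce
      then have "g j x0 < \<infinity>" using x0_fin j by blast
      moreover have "g j (xs 1 w) = g j (xs 0 w)"
        using g_block j upd_prox w False unfolding block_fun_def block_prox_def by (metis One_nat_def)
      ultimately show ?thesis using init_x w by simp
    qed (use prox_step_finite w in auto)
  next
    case (Suc k)
    show ?case
    proof (cases "j = idx (Suc k) w")
      case False
      then have "g j (xs (Suc (Suc k)) w) = g j (xs (Suc k) w)"
        using g_block j upd_prox w unfolding block_fun_def block_prox_def by metis
      then show ?thesis using Suc.IH by simp
    qed (use prox_step_finite w in auto)
  qed
  then show ?thesis using g_proper j by (auto simp: proper_fun_def)
qed

lemma F_real_convex_combination: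
  assumes S: "finite S" and c: "\<forall>k\<in>S. 0 \<le> c k" "(\<Sum>k\<in>S. c k) = 1"
    and y_fin: "\<forall>k\<in>S. \<forall>j<m. \<bar>g j (y k)\<bar> \<noteq> \<infinity>"
  shows "\<forall>j<m. \<bar>g j (\<Sum>k\<in>S. c k *\<^sub>R y k)\<bar> \<noteq> \<infinity>"
    and "F_real (\<Sum>k\<in>S. c k *\<^sub>R y k) \<le> (\<Sum>k\<in>S. c k * F_real (y k))"
proof -
  have S_ne: "S \<noteq> {}" using c(2) by (metis sum.empty zero_neq_one)
  have g_j: "\<bar>g j (\<Sum>k\<in>S. c k *\<^sub>R y k)\<bar> \<noteq> \<infinity> \<and>
      g_real j (\<Sum>k\<in>S. c k *\<^sub>R y k) \<le> (\<Sum>k\<in>S. c k * g_real j (y k))" if j: "j < m" for j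
proof -
    have gc: "convex_ereal (g j)" using g_convex j by blast
    have gp: "\<forall>v. -\<infinity> < g j v" using g_proper j unfolding proper_fun_def by blast
    have in_dom: "y k \<in> {v. g j v < \<infinity>}" if "k \<in> S" for k
    proof -
      have "\<bar>g j (y k)\<bar> \<noteq> \<infinity>" using y_fin[rule_format, OF that j] .
      then show ?thesis by (cases "g j (y k)") auto
    qed
    have "(\<Sum>k\<in>S. c k *\<^sub>R y k) \<in> {v. g j v < \<infinity>}"
      by (rule convex_sum[OF S convex_ereal_finite_part(1)[OF gc gp] c(2) c(1)[rule_format] in_dom])
    moreover have "-\<infinity> < g j (\<Sum>k\<in>S. c k *\<^sub>R y k)" using gp by blast
    ultimately have "\<bar>g j (\<Sum>k\<in>S. c k *\<^sub>R y k)\<bar> \<noteq> \<infinity>"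
      by (cases "g j (\<Sum>k\<in>S. c k *\<^sub>R y k)") simp_all
    moreover have "g_real j (\<Sum>k\<in>S. c k *\<^sub>R y k) \<le> (\<Sum>k\<in>S. c k * g_real j (y k))"
      by (rule convex_on_sum[OF S S_ne convex_ereal_finite_part(2)[OF gc gp] c(2) c(1)[rule_format] in_dom])
    ultimately show ?thesis by (rule conjI)
  qed
  then show "\<forall>j<m. \<bar>g j (\<Sum>k\<in>S. c k *\<^sub>R y k)\<bar> \<noteq> \<infinity>" by simp
  have "f (\<Sum>k\<in>S. c k *\<^sub>R y k) \<le> (\<Sum>k\<in>S. c k * f (y k))"
    by (rule convex_on_sum[OF S S_ne f_convex c(2) c(1)[rule_format] UNIV_I])
  moreover have "(\<Sum>j<m. g_real j (\<Sum>k\<in>S. c k *\<^sub>R y k)) \<le> (\<Sum>k\<in>S. c k * (\<Sum>j<m. g_real j (y k)))"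
proof -
    have "(\<Sum>j<m. g_real j (\<Sum>k\<in>S. c k *\<^sub>R y k)) \<le> (\<Sum>j<m. \<Sum>k\<in>S. c k * g_real j (y k))"
      using g_j by (intro sum_mono) simp
    also have "\<dots> = (\<Sum>k\<in>S. c k * (\<Sum>j<m. g_real j (y k)))"
      by (simp add: sum_distrib_left) (rule sum.swap)
    finally show ?thesis .
  qed
  ultimately show "F_real (\<Sum>k\<in>S. c k *\<^sub>R y k) \<le> (\<Sum>k\<in>S. c k * F_real (y k))"
    by (simp add: F_real_def distrib_left sum.distrib)
qed

lemma ergodic_average:
  fixes K :: nat
  assumes w: "w \<in> space M" and x0_fin: "m = 1 \<or> (\<forall>j<m. g j x0 < \<infinity>)"
  defines "T \<equiv> 1 + real K / real m"
  defines "xb \<equiv> (1 / T) *\<^sub>R (xs (Suc K) w + (1 / real m) *\<^sub>R (\<Sum>k=1..K. xs k w))"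
  shows "\<forall>j<m. \<bar>g j xb\<bar> \<noteq> \<infinity>"
    and "T * (F_real xb - F_real x)
      \<le> (F_real (xs (Suc K) w) - F_real x) + (1 / real m) * (\<Sum>k\<in>{1..K}. F_real (xs k w) - F_real x)"
    and "A *v xb - b = (1 / T) *\<^sub>R (rs (Suc K) w + (1 / real m) *\<^sub>R (\<Sum>j\<in>{1..K}. rs j w))"
proof -
  let ?c = "ergodic_weight m K"
  note avg = sum_ergodic_weight_scaleR[of m K, folded T_def]
  have T: "T > 0" using m_pos by (simp add: T_def add_pos_nonneg)
  have c: "\<forall>k\<in>{1..Suc K}. 0 \<le> ?c k" "(\<Sum>k\<in>{1..Suc K}. ?c k) = 1"
    by (simp add: ergodic_weight_nonneg) (rule sum_ergodic_weight)
  have xb: "xb = (\<Sum>k\<in>{1..Suc K}. ?c k *\<^sub>R xs k w)" by (simp only: avg xb_def)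
  have fin: "\<forall>k\<in>{1..Suc K}. \<forall>j<m. \<bar>g j (xs k w)\<bar> \<noteq> \<infinity>"
  proof (intro ballI allI impI)
    fix k j assume "k \<in> {1..Suc K}" and j: "j < m"
    then obtain n where "k = Suc n" by (cases k) auto
    then show "\<bar>g j (xs k w)\<bar> \<noteq> \<infinity>" using g_finite_iterates[OF x0_fin w j] by simp
  qed
  show "\<forall>j<m. \<bar>g j xb\<bar> \<noteq> \<infinity>"
    unfolding xb by (rule F_real_convex_combination(1)[OF _ c fin]) simp
  have "F_real xb - F_real x \<le> (\<Sum>k\<in>{1..Suc K}. ?c k *\<^sub>R (F_real (xs k w) - F_real x))"
    using F_real_convex_combination(2)[OF _ c fin] c(2)
    by (simp add: xb right_diff_distrib sum_subtractf flip: sum_distrib_right)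
  then show "T * (F_real xb - F_real x)
      \<le> (F_real (xs (Suc K) w) - F_real x) + (1 / real m) * (\<Sum>k\<in>{1..K}. F_real (xs k w) - F_real x)"
    unfolding avg using T by (simp add: field_simps)
  have "A *v xb - b = (\<Sum>k\<in>{1..Suc K}. ?c k *\<^sub>R (A *v xs k w)) - (\<Sum>k\<in>{1..Suc K}. ?c k) *\<^sub>R b"
    unfolding xb c(2) linear_sum[OF matrix_vector_mul_linear] by (simp add: matrix_vector_mult_scaleR)
  also have "\<dots> = (\<Sum>k\<in>{1..Suc K}. ?c k *\<^sub>R rs k w)"
    using residual_eq[OF w] by (simp add: scaleR_sum_left sum_subtractf scaleR_diff_right scaleR_left_distrib)
  finally show "A *v xb - b = (1 / T) *\<^sub>R (rs (Suc K) w + (1 / real m) *\<^sub>R (\<Sum>j\<in>{1..K}. rs j w))"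
    unfolding avg .
qed

lemma Phi_pathwise_bound:
  fixes K :: nat
  assumes w: "w \<in> space M" and x_feas: "A *v x = b" and x_fin: "\<forall>j<m. \<bar>g j x\<bar> \<noteq> \<infinity>"
    and x0_fin: "m = 1 \<or> (\<forall>j<m. g j x0 < \<infinity>)"
  defines "T \<equiv> 1 + real K / real m"
  shows "Phi f g m A b ((1 / T) *\<^sub>R (xs (Suc K) w + (1 / real m) *\<^sub>R (\<Sum>k=1..K. xs k w))) x lam
    \<le> ereal ((1 / T) * ((1 - 1 / real m) * (F_real x0 - F_real x) + quad_form P (x - x0) / 2
        + (\<beta>/2 - \<beta>/real m) * inner (A *v x0 - b) (A *v x0 - b) + inner lam lam / (2 * real m * \<rho>)
        + (\<Sum>k\<le>K. gap_noise x k w)))"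
    (is "Phi f g m A b ?xb x lam \<le> ereal ((1 / T) * ?R)")
proof -
  note avg = ergodic_average[OF w x0_fin, where K=K, folded T_def]
  have T: "T > 0" using m_pos by (simp add: T_def add_pos_nonneg)
  have "T * (F_real ?xb - F_real x - lam \<bullet> (A *v ?xb - b))
      = T * (F_real ?xb - F_real x) - lam \<bullet> (rs (Suc K) w + (1 / real m) *\<^sub>R (\<Sum>j\<in>{1..K}. rs j w))"
    unfolding avg(3) using T by (simp add: algebra_simps)
  also have "\<dots> \<le> ?R"
    using avg(2)[of x] pathwise_bound[OF w x_feas x_fin, of K lam] init_r w by simp
  finally have "F_real ?xb - F_real x - lam \<bullet> (A *v ?xb - b) \<le> (1 / T) * ?R"
    using T by (simp add: field_simps)
  then show ?thesis
    unfolding Phi_def Fobj_eq_F_real[OF avg(1)] Fobj_eq_F_real[OF x_fin] by simp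
qed

lemma expected_Phi_le_integral:
  fixes K :: nat and x :: "real^'n" and lam :: "'w \<Rightarrow> real^'q"
  assumes x_feas: "A *v x = b" and x_fin: "\<forall>j<m. \<bar>g j x\<bar> \<noteq> \<infinity>"
    and x0_fin: "m = 1 \<or> (\<forall>j<m. g j x0 < \<infinity>)"
    and lam_sq: "integrable M (\<lambda>w. (norm (lam w))\<^sup>2)"
  defines "T \<equiv> 1 + real K / real m"
  shows "eexpectation M (\<lambda>w. Phi f g m A b
            ((1 / T) *\<^sub>R (xs (Suc K) w + (1 / real m) *\<^sub>R (\<Sum>k=1..K. xs k w))) x (lam w))
    \<le> ereal ((1 / T) * ((1 - 1 / real m) * (F_real x0 - F_real x) + quad_form P (x - x0) / 2
        + (\<beta>/2 - \<beta>/real m) * inner (A *v x0 - b) (A *v x0 - b)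
        + (\<integral>w. (norm (lam w))\<^sup>2 \<partial>M) / (2 * real m * \<rho>)))"
proof -
  define C where "C = (1 - 1 / real m) * (F_real x0 - F_real x) + quad_form P (x - x0) / 2
      + (\<beta>/2 - \<beta>/real m) * inner (A *v x0 - b) (A *v x0 - b)"
  define Z where "Z w = (1 / T) * (C + (norm (lam w))\<^sup>2 / (2 * real m * \<rho>) + (\<Sum>k\<le>K. gap_noise x k w))" for w
  have Z_int: "integrable M Z"
    unfolding Z_def using lam_sq gap_noise_integral(1) by (intro integrable_mult_right) auto
  have "eexpectation M (\<lambda>w. Phi f g m A b
            ((1 / T) *\<^sub>R (xs (Suc K) w + (1 / real m) *\<^sub>R (\<Sum>k=1..K. xs k w))) x (lam w))
      \<le> ereal (\<integral>w. Z w \<partial>M)"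
    using Phi_pathwise_bound[OF _ x_feas x_fin x0_fin, where K=K, folded T_def]
    by (intro eexpectation_le_integral[OF _ Z_int]) (simp add: Z_def C_def power2_norm_eq_inner)
  also have "(\<integral>w. Z w \<partial>M) = (1 / T) * (C + (\<integral>w. (norm (lam w))\<^sup>2 \<partial>M) / (2 * real m * \<rho>))"
    unfolding Z_def using lam_sq gap_noise_integral
    by (simp add: Bochner_Integration.integral_sum Bochner_Integration.integral_add prob_space)
  finally show ?thesis by (simp add: C_def)
qed

theorem expected_Phi_bound:
  fixes K :: nat and x :: "real^'n" and lam :: "'w \<Rightarrow> real^'q"
  assumes x_feas: "A *v x = b" and x_dom: "\<bar>Fobj f g m x\<bar> \<noteq> \<infinity>"
    and lam_sq: "integrable M (\<lambda>w. (norm (lam w))\<^sup>2)"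
  shows "eexpectation M (\<lambda>w. Phi f g m A b
            ((1 / (1 + real K / real m)) *\<^sub>R (xs (Suc K) w + (1 / real m) *\<^sub>R (\<Sum>k=1..K. xs k w)))
            x (lam w))
    \<le> ereal (1 / (1 + real K / real m)) *
       ( ereal (1 - 1 / real m) * (Fobj f g m x0 - Fobj f g m x)
         + ereal ((1/2) * ((x0 - x) \<bullet> (P *v (x0 - x))))
         + ereal ((\<beta> / 2 - \<beta> / real m) * (norm (A *v x0 - b))\<^sup>2)
         + ereal (1 / (2 * real m * \<rho>) * (\<integral>w. (norm (lam w))\<^sup>2 \<partial>M)))"
proof (cases "m \<noteq> 1 \<and> (\<exists>j<m. g j x0 = \<infinity>)")
  case True
  then have "Fobj f g m x0 = \<infinity>" by (auto simp: Fobj_def sum_Pinfty)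
  moreover have "0 < 1 - 1 / real m" using True m_pos by (simp add: field_simps)
  moreover have "0 < 1 / (1 + real K / real m)" using m_pos by (simp add: add_pos_nonneg)
  ultimately show ?thesis
    using x_dom by (cases "Fobj f g m x") auto
next
  case False
  then have x0_fin: "m = 1 \<or> (\<forall>j<m. g j x0 < \<infinity>)" by (auto simp: less_top)
  have x_fin: "\<forall>j<m. \<bar>g j x\<bar> \<noteq> \<infinity>" using g_finite_if_Fobj_finite[OF x_dom] by blast
  have "ereal (1 - 1 / real m) * (Fobj f g m x0 - Fobj f g m x)
      = ereal ((1 - 1 / real m) * (F_real x0 - F_real x))"
  proof (cases "m = 1")
    case False
    then have "\<forall>j<m. \<bar>g j x0\<bar> \<noteq> \<infinity>" using x0_fin g_proper by (auto simp: proper_fun_def)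
    then show ?thesis by (simp add: Fobj_eq_F_real x_fin)
  qed (simp add: zero_ereal_def[symmetric])
  then show ?thesis
    using expected_Phi_le_integral[OF x_feas x_fin x0_fin lam_sq, of K]
    by (simp add: quad_form_diff_commute[where x=x and y=x0] power2_norm_eq_inner)
qed

end

theorem mainTheorem7:
  fixes M :: "'w measure"
    and m :: nat and blk :: "'n::finite \<Rightarrow> nat"
    and f :: "real^'n \<Rightarrow> real" and gradf :: "real^'n \<Rightarrow> real^'n"
    and g :: "nat \<Rightarrow> real^'n \<Rightarrow> ereal"
    and A :: "real^'n^'q::finite" and b :: "real^'q"
    and L :: "nat \<Rightarrow> real" and Lr :: real
    and P :: "real^'n^'n" and \<beta> \<rho> :: real
    and idx :: "nat \<Rightarrow> 'w \<Rightarrow> nat"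
    and xs :: "nat \<Rightarrow> 'w \<Rightarrow> real^'n" and rs lams :: "nat \<Rightarrow> 'w \<Rightarrow> real^'q"
    and x0 :: "real^'n"
    and K :: nat and x :: "real^'n" and lam :: "'w \<Rightarrow> real^'q"
  assumes M: "prob_space M"
    and m_pos: "m \<ge> 1"
    and blk_range: "\<forall>j. blk j < m" and blk_nonempty: "\<forall>i<m. \<exists>j. blk j = i"
    and f_convex: "convex_on UNIV f"
    and f_grad: "\<forall>z. (f has_derivative (\<lambda>h. gradf z \<bullet> h)) (at z)"
    and gradf_cont: "continuous_on UNIV gradf"
    and g_block: "\<forall>i<m. block_fun blk i (g i)"
    and g_proper: "\<forall>i<m. proper_fun (g i)"
    and g_convex: "\<forall>i<m. convex_ereal (g i)"
    and g_lsc: "\<forall>i<m. lsc_ereal (g i)"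
    and L_pos: "\<forall>i<m. L i > 0"
    and Lip_block: "\<forall>i<m. \<forall>z y. norm (blockU blk i (gradf (z + blockU blk i y) - gradf z))
                         \<le> L i * norm (blockU blk i y)"
    and Lip_full: "\<forall>i<m. \<forall>z y. norm (gradf (z + blockU blk i y) - gradf z) \<le> Lr * norm (blockU blk i y)"
    and P_sym: "transpose P = P"
    and P_blkdiag: "\<forall>j l. blk j \<noteq> blk l \<longrightarrow> P $ j $ l = 0"
    and P_psd: "\<forall>v. 0 \<le> v \<bullet> (P *v v)"
    and P_bound: "\<forall>i<m. \<forall>v. v = blockU blk i v \<longrightarrow>
                     L i * (norm v)\<^sup>2 + \<beta> * (norm (A *v v))\<^sup>2 \<le> v \<bullet> (P *v v)"
    and beta_pos: "\<beta> > 0" and rho_pos: "0 < \<rho>" and rho_le: "\<rho> \<le> \<beta> / real m"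
    and idx_indep: "prob_space.indep_vars M (\<lambda>_. count_space UNIV) idx UNIV"
    and idx_range: "\<forall>k. \<forall>w\<in>space M. idx k w < m"
    and idx_unif: "\<forall>k i. i < m \<longrightarrow> measure M {w \<in> space M. idx k w = i} = 1 / real m"
    and init_x: "\<forall>w\<in>space M. xs 0 w = x0"
    and init_r: "\<forall>w\<in>space M. rs 0 w = A *v x0 - b"
    and init_lam: "\<forall>w\<in>space M. lams 0 w = 0"
    and upd_keep: "\<forall>k. \<forall>w\<in>space M. \<forall>j. blk j \<noteq> idx k w \<longrightarrow> xs (Suc k) w $ j = xs k w $ j"
    and upd_argmin: "\<forall>k. \<forall>w\<in>space M. \<forall>z. (\<forall>j. blk j \<noteq> idx k w \<longrightarrow> z $ j = xs k w $ j) \<longrightarrow>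
        ereal (blockU blk (idx k w) (gradf (xs k w) - transpose A *v (lams k w - \<beta> *\<^sub>R rs k w)) \<bullet> xs (Suc k) w)
          + g (idx k w) (xs (Suc k) w)
          + ereal ((1/2) * ((xs (Suc k) w - xs k w) \<bullet> (P *v (xs (Suc k) w - xs k w))))
        \<le> ereal (blockU blk (idx k w) (gradf (xs k w) - transpose A *v (lams k w - \<beta> *\<^sub>R rs k w)) \<bullet> z)
          + g (idx k w) z
          + ereal ((1/2) * ((z - xs k w) \<bullet> (P *v (z - xs k w))))"
    and upd_r: "\<forall>k. \<forall>w\<in>space M. rs (Suc k) w = rs k w + A *v (xs (Suc k) w - xs k w)"
    and upd_lam: "\<forall>k. \<forall>w\<in>space M. lams (Suc k) w = lams k w - \<rho> *\<^sub>R rs (Suc k) w"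
    and K_pos: "K \<ge> 1"
    and x_feas: "A *v x = b"
    and x_dom: "\<bar>Fobj f g m x\<bar> \<noteq> \<infinity>"
    and lam_meas: "lam \<in> borel_measurable M"
    and lam_sq: "integrable M (\<lambda>w. (norm (lam w))\<^sup>2)"
  shows "eexpectation M (\<lambda>w. Phi f g m A b
            ((1 / (1 + real K / real m)) *\<^sub>R (xs (Suc K) w + (1 / real m) *\<^sub>R (\<Sum>k=1..K. xs k w)))
            x (lam w))
    \<le> ereal (1 / (1 + real K / real m)) *
       ( ereal (1 - 1 / real m) * (Fobj f g m x0 - Fobj f g m x)
         + ereal ((1/2) * ((x0 - x) \<bullet> (P *v (x0 - x))))
         + ereal ((\<beta> / 2 - \<beta> / real m) * (norm (A *v x0 - b))\<^sup>2)
         + ereal (1 / (2 * real m * \<rho>) * (\<integral>w. (norm (lam w))\<^sup>2 \<partial>M)))"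
proof -
  have upd_prox: "\<forall>k. \<forall>w\<in>space M. block_prox blk P (idx k w)
      (\<lambda>z. ereal (blockU blk (idx k w) (gradf (xs k w) - transpose A *v (lams k w - \<beta> *\<^sub>R rs k w)) \<bullet> z)
           + g (idx k w) z) (xs k w) (xs (Suc k) w)"
    using upd_keep upd_argmin unfolding block_prox_def by blast
  interpret primal_dual_block_update M m blk f gradf g A b L P \<beta> \<rho> idx xs rs lams x0
    by (intro primal_dual_block_update.intro primal_dual_block_update_axioms.intro) (fact+)
  show ?thesis by (rule expected_Phi_bound[OF x_feas x_dom lam_sq])
qed

end
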